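(* Let $\Pi$ be a class of subsets of $[K]$ such that for every $k\in[K]$ there exist $A,B\in\Pi$ with $k\in A$, $k\notin B$. Suppose that for every $\alpha,\beta\in(0,1)$ the thresholds $a,b$ of the parallel SPRT $\tilde\chi$ are chosen so that $\tilde\chi\in\Delta(\alpha,\beta,\Pi)$, and that $a\sim|\log\alpha|$, $b\sim|\log\beta|$ as $\alpha,\beta\to0$. Suppose that for every $k\in[K]$ there are positive $I_k,J_k$ such that $\mathrm P_k^1(\limsup_n\lambda_k(n)/n\le I_k)=1$, $\mathrm P_k^0(\limsup_n(-\lambda_k(n))/n\le J_k)=1$, and for every $\epsilon>0$, $\sum_n\mathrm P_k^1(\lambda_k(n)/n\le I_k-\epsilon)<\infty$ and $\sum_n\mathrm P_k^0(-\lambda_k(n)/n\le J_k-\epsilon)<\infty$. Then, as $\alpha,\beta\to0$, $$\mathrm E_A[\tilde T_i]\sim\mathcal L'_{i,A}(\alpha,\beta,\Pi)\sim\frac{|\log\alpha|}{I_i},\qquad \mathrm E_A[\tilde T_j]\sim\mathcal L'_{j,A}(\alpha,\beta,\Pi)\sim\frac{|\log\beta|}{J_j},$$ simultaneously for every $i\in A$, $j\notin A$, $A\in\Pi$.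
   Context: Let $K\ge1$, $[K]=\{1,\dots,K\}$, $\mathbb N=\{1,2,\dots\}$. There are $K$ independent data streams $X_k=\{X_k(n):n\in\mathbb N\}$; $\mathcal F_k(n)=\sigma(X_k(t):t\le n)$, $\mathcal F(n)=\sigma(\mathcal F_k(n):k\in[K])$. For each $k$, $\mathrm P_k^0,\mathrm P_k^1$ are distributions of $X_k$ mutually absolutely continuous on each $\mathcal F_k(n)$, $\lambda_k(n)=\log\frac{d\mathrm P_k^1}{d\mathrm P_k^0}(\mathcal F_k(n))$. For $A\subseteq[K]$, $\mathrm P_A$ is the joint law with independent streams, $X_k\sim\mathrm P_k^1$ if $k\in A$, $\mathrm P_k^0$ otherwise; $\mathrm E_A$ its expectation. A procedure $\chi=(\mathbf T,\mathbf D)$: $\mathbb N$-valued stopping times $T_k$ w.r.t. $\{\mathcal F(n)\}$ and $\mathcal F(T_k)$-measurable Bernoulli $D_k$. It is decentralized if each $T_k$ is a stopping time w.r.t. $\{\mathcal F_k(n)\}$ and $D_k$ is $\mathcal F_k(T_k)$-measurable; $\Delta'$ denotes the decentralized procedures. $\mathrm{FWE}^1_A(\chi)=\mathrm P_A(\exists j\notin A:D_j=1)$, $\mathrm{FWE}^2_A(\chi)=\mathrm P_A(\exists i\in A:D_i=0)$. $\Delta(\alpha,\beta,\Pi)$: procedures with $\mathrm{FWE}^1_A\le\alpha$ and $\mathrm{FWE}^2_A\le\beta$ for all $A\in\Pi$. $\mathcal L'_{k,A}(\alpha,\beta,\Pi)=\inf\{\mathrm E_A[T_k]:\chi\in\Delta'\cap\Delta(\alpha,\beta,\Pi)\}$.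 Parallel SPRT $\tilde\chi$ (thresholds $a,b>0$): $\tilde T_k=\inf\{n:\lambda_k(n)\notin(-b,a)\}$, $\tilde D_k=\mathbf 1\{\lambda_k(\tilde T_k)\ge a\}$. $x\sim y$ means $x/y\to1$. *)

theory Defs
  imports "HOL-Probability.Probability" "HOL-Library.Landau_Symbols"
begin

text \<open>Stream k takes values in the measurable space M k; a path of
stream k is a function nat => 'a whose coordinates t in {1..} are X_k(1), X_k(2), ...
The streams are indexed by [K] = {1..K}; a joint outcome is a function from
stream indices to paths.\<close>

definition path_space :: "('a measure) \<Rightarrow> (nat \<Rightarrow> 'a) measure" where
  "path_space S = PiM {1..} (\<lambda>_. S)"

definition joint_space :: "nat \<Rightarrow> (nat \<Rightarrow> 'a measure) \<Rightarrow> (nat \<Rightarrow> nat \<Rightarrow> 'a) measure" where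
  "joint_space K M = PiM {1..K} (\<lambda>k. path_space (M k))"

definition stream_filt :: "('a measure) \<Rightarrow> nat \<Rightarrow> (nat \<Rightarrow> 'a) measure" where
  "stream_filt S n = vimage_algebra (space (path_space S)) (\<lambda>x. restrict x {1..n}) (PiM {1..n} (\<lambda>_. S))"

definition local_filt :: "nat \<Rightarrow> (nat \<Rightarrow> 'a measure) \<Rightarrow> nat \<Rightarrow> nat \<Rightarrow> (nat \<Rightarrow> nat \<Rightarrow> 'a) measure" where
  "local_filt K M k n = vimage_algebra (space (joint_space K M)) (\<lambda>\<omega>. restrict (\<omega> k) {1..n})
      (PiM {1..n} (\<lambda>_. M k))"

text \<open>F(n) = sigma(F_k(n) : k in [K]) on the joint space.\<close>
definition global_filt :: "nat \<Rightarrow> (nat \<Rightarrow> 'a measure) \<Rightarrow> nat \<Rightarrow> (nat \<Rightarrow> nat \<Rightarrow> 'a) measure" where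
  "global_filt K M n = vimage_algebra (space (joint_space K M))
      (\<lambda>\<omega>. \<lambda>k\<in>{1..K}. restrict (\<omega> k) {1..n}) (PiM {1..K} (\<lambda>k. PiM {1..n} (\<lambda>_. M k)))"

definition P_A :: "nat \<Rightarrow> (nat \<Rightarrow> (nat \<Rightarrow> 'a) measure) \<Rightarrow> (nat \<Rightarrow> (nat \<Rightarrow> 'a) measure)
    \<Rightarrow> nat set \<Rightarrow> (nat \<Rightarrow> nat \<Rightarrow> 'a) measure" where
  "P_A K P0 P1 A = PiM {1..K} (\<lambda>k. if k \<in> A then P1 k else P0 k)"

definition is_procedure :: "nat \<Rightarrow> (nat \<Rightarrow> 'a measure) \<Rightarrow> (nat \<Rightarrow> (nat \<Rightarrow> nat \<Rightarrow> 'a) \<Rightarrow> nat)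
    \<Rightarrow> (nat \<Rightarrow> (nat \<Rightarrow> nat \<Rightarrow> 'a) \<Rightarrow> bool) \<Rightarrow> bool" where
  "is_procedure K M T D \<longleftrightarrow> (\<forall>k\<in>{1..K}.
      (\<forall>\<omega>\<in>space (joint_space K M). 1 \<le> T k \<omega>) \<and>
      stopping_time (global_filt K M) (T k) \<and>
      D k \<in> measurable (filtration.pre_sigma (space (joint_space K M)) (global_filt K M) (T k))
                        (count_space UNIV))"

definition is_decentralized :: "nat \<Rightarrow> (nat \<Rightarrow> 'a measure) \<Rightarrow> (nat \<Rightarrow> (nat \<Rightarrow> nat \<Rightarrow> 'a) \<Rightarrow> nat)
    \<Rightarrow> (nat \<Rightarrow> (nat \<Rightarrow> nat \<Rightarrow> 'a) \<Rightarrow> bool) \<Rightarrow> bool" where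
  "is_decentralized K M T D \<longleftrightarrow> is_procedure K M T D \<and> (\<forall>k\<in>{1..K}.
      stopping_time (local_filt K M k) (T k) \<and>
      D k \<in> measurable (filtration.pre_sigma (space (joint_space K M)) (local_filt K M k) (T k))
                        (count_space UNIV))"

definition FWE1 :: "nat \<Rightarrow> (nat \<Rightarrow> (nat \<Rightarrow> 'a) measure) \<Rightarrow> (nat \<Rightarrow> (nat \<Rightarrow> 'a) measure)
    \<Rightarrow> (nat \<Rightarrow> (nat \<Rightarrow> nat \<Rightarrow> 'a) \<Rightarrow> bool) \<Rightarrow> nat set \<Rightarrow> real" where
  "FWE1 K P0 P1 D A = measure (P_A K P0 P1 A)
      {\<omega> \<in> space (P_A K P0 P1 A). \<exists>j\<in>{1..K} - A. D j \<omega>}"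

definition FWE2 :: "nat \<Rightarrow> (nat \<Rightarrow> (nat \<Rightarrow> 'a) measure) \<Rightarrow> (nat \<Rightarrow> (nat \<Rightarrow> 'a) measure)
    \<Rightarrow> (nat \<Rightarrow> (nat \<Rightarrow> nat \<Rightarrow> 'a) \<Rightarrow> bool) \<Rightarrow> nat set \<Rightarrow> real" where
  "FWE2 K P0 P1 D A = measure (P_A K P0 P1 A)
      {\<omega> \<in> space (P_A K P0 P1 A). \<exists>i\<in>A. \<not> D i \<omega>}"

definition error_ok :: "nat \<Rightarrow> (nat \<Rightarrow> (nat \<Rightarrow> 'a) measure) \<Rightarrow> (nat \<Rightarrow> (nat \<Rightarrow> 'a) measure)
    \<Rightarrow> (nat \<Rightarrow> (nat \<Rightarrow> nat \<Rightarrow> 'a) \<Rightarrow> bool) \<Rightarrow> real \<Rightarrow> real \<Rightarrow> nat set set \<Rightarrow> bool" where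
  "error_ok K P0 P1 D \<alpha> \<beta> Pis \<longleftrightarrow>
     (\<forall>A\<in>Pis. FWE1 K P0 P1 D A \<le> \<alpha> \<and> FWE2 K P0 P1 D A \<le> \<beta>)"

definition L_dec :: "nat \<Rightarrow> (nat \<Rightarrow> 'a measure) \<Rightarrow> (nat \<Rightarrow> (nat \<Rightarrow> 'a) measure) \<Rightarrow> (nat \<Rightarrow> (nat \<Rightarrow> 'a) measure)
    \<Rightarrow> nat \<Rightarrow> nat set \<Rightarrow> real \<Rightarrow> real \<Rightarrow> nat set set \<Rightarrow> ennreal" where
  "L_dec K M P0 P1 k A \<alpha> \<beta> Pis =
     (INF TD \<in> {(T, D). is_decentralized K M T D \<and> error_ok K P0 P1 D \<alpha> \<beta> Pis}.
        \<integral>\<^sup>+ \<omega>. ennreal (real (fst TD k \<omega>)) \<partial>(P_A K P0 P1 A))"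

text \<open>Parallel SPRT with thresholds a, b.  lam k n x is lambda_k(n) evaluated on the path x
of stream k.  The stopping time takes the value \<infinity> if the walk never leaves (-b, a).\<close>
definition sprt_T :: "(nat \<Rightarrow> nat \<Rightarrow> (nat \<Rightarrow> 'a) \<Rightarrow> real) \<Rightarrow> real \<Rightarrow> real \<Rightarrow> nat
    \<Rightarrow> (nat \<Rightarrow> nat \<Rightarrow> 'a) \<Rightarrow> enat" where
  "sprt_T lam a b k \<omega> =
     (if \<exists>n\<ge>1. lam k n (\<omega> k) \<notin> {-b<..<a}
      then enat (LEAST n. n \<ge> 1 \<and> lam k n (\<omega> k) \<notin> {-b<..<a}) else \<infinity>)"

definition sprt_D :: "(nat \<Rightarrow> nat \<Rightarrow> (nat \<Rightarrow> 'a) \<Rightarrow> real) \<Rightarrow> real \<Rightarrow> real \<Rightarrow> nat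
    \<Rightarrow> (nat \<Rightarrow> nat \<Rightarrow> 'a) \<Rightarrow> bool" where
  "sprt_D lam a b k \<omega> =
     (case sprt_T lam a b k \<omega> of enat n \<Rightarrow> a \<le> lam k n (\<omega> k) | \<infinity> \<Rightarrow> False)"

definition E_sprt_T :: "nat \<Rightarrow> (nat \<Rightarrow> (nat \<Rightarrow> 'a) measure) \<Rightarrow> (nat \<Rightarrow> (nat \<Rightarrow> 'a) measure)
    \<Rightarrow> (nat \<Rightarrow> nat \<Rightarrow> (nat \<Rightarrow> 'a) \<Rightarrow> real) \<Rightarrow> real \<Rightarrow> real \<Rightarrow> nat \<Rightarrow> nat set \<Rightarrow> ennreal" where
  "E_sprt_T K P0 P1 lam a b k A =
     (\<integral>\<^sup>+ \<omega>. ennreal_of_enat (sprt_T lam a b k \<omega>) \<partial>(P_A K P0 P1 A))"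

definition ab_to_0 :: "(real \<times> real) filter" where
  "ab_to_0 = at (0, 0) within ({0<..<1} \<times> {0<..<1})"

end

theory Submission
  imports Defs "HOL-Real_Asymp.Real_Asymp"
begin

(* Let B differ from A in stream k.  Changing measure from P_A to P_B on the
   events where stream k stops at some n <= N with its log-likelihood ratio still below
   c = (1 + d) I N costs at most a factor e^c, so a procedure with P_B-error alpha at stream k
   stops by time N with P_A-probability at most beta + e^c alpha + P_A(max_{n <= N} lambda_n >= c).
   The limsup condition makes the last term vanish, and N ~ (1 - d) |log alpha| / ((1 + d) I)
   makes e^c alpha small, so E_A[T_k] >= (1 - delta) |log alpha| / I.  The SPRT on stream k stops once its (suitably oriented) log-likelihood ratio
   exceeds a ~ |log alpha|, and complete convergence of lambda_n / n bounds the expected hitting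
   time by a / (I - eps) + O(1).  Truncating the SPRT with thresholds for (alpha, beta/2) at a
   large deterministic time yields a decentralized procedure in Delta(alpha, beta, Pi), and
   b(alpha, beta/2) ~ |log beta|; this bounds L' from above. *)

section \<open>Preliminaries from probability and asymptotics\<close>

lemma sets_vimage_algebra_subset:
  assumes "f \<in> measurable N P"
  shows "sets (vimage_algebra (space N) f P) \<subseteq> sets N"
  using assms by (auto simp: sets_vimage_algebra2 measurable_def)

lemma (in filtration) pred_stopped_at:
  assumes T: "stopping_time F T" and P: "Measurable.pred (pre_sigma T) P"
  shows "Measurable.pred (F t) (\<lambda>\<omega>. T \<omega> = t \<and> P \<omega>)"
proof -
  have "{\<omega>\<in>\<Omega>. P \<omega>} \<in> sets (pre_sigma T)"
    using P by (simp add: pred_def space_pre_sigma)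
  from sets_pre_sigmaD[OF T this, of t]
  have [measurable]: "Measurable.pred (F t) (\<lambda>\<omega>. P \<omega> \<and> T \<omega> \<le> t)"
    by (simp add: pred_def space_F)
  have [measurable]: "Measurable.pred (F t) (\<lambda>\<omega>. T \<omega> = t)"
    by (rule stopping_time_eq_const[OF T])
  have "(\<lambda>\<omega>. T \<omega> = t \<and> P \<omega>) = (\<lambda>\<omega>. T \<omega> = t \<and> (P \<omega> \<and> T \<omega> \<le> t))"
    by auto
  then show ?thesis
    by simp measurable
qed

lemma (in prob_space) prob_tendsto_0_if_AE_eventually_notin:
  assumes B: "\<And>N. B N \<in> events"
    and AE: "AE \<omega> in M. eventually (\<lambda>N. \<omega> \<notin> B N) sequentially"
  shows "(\<lambda>N. prob (B N)) \<longlonglongrightarrow> 0"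
proof -
  have "(\<lambda>N. integral\<^sup>L M (indicator (B N))) \<longlonglongrightarrow> integral\<^sup>L M (\<lambda>_. 0 :: real)"
  proof (rule integral_dominated_convergence[where w = "\<lambda>_. 1"])
    show "AE \<omega> in M. (\<lambda>N. indicator (B N) \<omega> :: real) \<longlonglongrightarrow> 0"
      using AE by eventually_elim (auto intro!: tendsto_eventually elim!: eventually_mono)
  qed (use B in \<open>auto simp: indicator_def\<close>)
  then show ?thesis
    using B by (simp add: Int_absorb2 sets.sets_into_space)
qed

lemma eventually_running_max_less:
  fixes x :: "nat \<Rightarrow> real"
  assumes limsup: "limsup (\<lambda>n. ereal (x n / real n)) \<le> ereal I" and I: "I > 0" and d: "d > 0"
  shows "eventually (\<lambda>N. \<forall>n\<in>{1..N}. x n < (1 + d) * I * real N) sequentially"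
proof -
  have "limsup (\<lambda>n. ereal (x n / real n)) < ereal ((1 + d/2) * I)"
    using limsup I d by (simp add: order_le_less_trans)
  then have "eventually (\<lambda>n. x n / real n < (1 + d/2) * I) sequentially"
    by (auto dest: Limsup_lessD)
  then obtain n0 where n0: "\<And>n. n \<ge> n0 \<Longrightarrow> x n / real n < (1 + d/2) * I"
    by (auto simp: eventually_sequentially)
  define C where "C = (\<Sum>n<n0. \<bar>x n\<bar>)"
  have C: "x n \<le> C" if "n < n0" for n
    using that member_le_sum[of n "{..<n0}" "\<lambda>n. \<bar>x n\<bar>"] by (auto simp: C_def)
  have dI: "d/2 * I > 0" using d I by simp
  show ?thesis unfolding eventually_sequentially
  proof (intro exI allI impI ballI)
    fix N n assume N: "N \<ge> nat \<lceil>C / (d/2 * I)\<rceil> + 1" and n: "n \<in> {1..N}"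
    have "C / (d/2 * I) \<le> real (nat \<lceil>C / (d/2 * I)\<rceil>)"
      by (rule real_nat_ceiling_ge)
    also have "\<dots> \<le> real N"
      using N by (intro of_nat_mono) linarith
    finally have "C \<le> d/2 * I * real N"
      using dI by (simp add: pos_divide_le_eq mult.commute)
    have gap: "d/2 * I * real N < (1 + d/2) * I * real N" "(1 + d/2) * I * real N < (1 + d) * I * real N"
      using I d N by (simp_all add: algebra_simps)
    show "x n < (1 + d) * I * real N"
    proof (cases "n < n0")
      case True
      then show ?thesis
        using C[OF True] \<open>C \<le> d/2 * I * real N\<close> gap by linarith
    next
      case False
      have "x n < (1 + d/2) * I * real n"
        using n0[of n] False n by (simp add: field_simps)
      also have "\<dots> \<le> (1 + d/2) * I * real N"
        using n I d by (intro mult_left_mono) auto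
      finally show ?thesis
        using gap by linarith
    qed
  qed
qed

lemma (in prob_space) prob_running_max_exceeds_tendsto_0:
  fixes \<Lambda> :: "nat \<Rightarrow> 'a \<Rightarrow> real"
  assumes meas: "\<And>n. n \<ge> 1 \<Longrightarrow> \<Lambda> n \<in> borel_measurable M"
    and limsup: "AE \<omega> in M. limsup (\<lambda>n. ereal (\<Lambda> n \<omega> / real n)) \<le> ereal I"
    and I: "I > 0" and d: "d > 0"
  shows "(\<lambda>N. prob {\<omega>\<in>space M. \<exists>n\<in>{1..N}. (1 + d) * I * real N \<le> \<Lambda> n \<omega>}) \<longlonglongrightarrow> 0"
proof (rule prob_tendsto_0_if_AE_eventually_notin)
  fix N
  have "{\<omega>\<in>space M. \<exists>n\<in>{1..N}. (1 + d) * I * real N \<le> \<Lambda> n \<omega>}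
      = (\<Union>n\<in>{1..N}. {\<omega>\<in>space M. (1 + d) * I * real N \<le> \<Lambda> n \<omega>})"
    by blast
  also have "\<dots> \<in> events"
    using meas by (intro sets.finite_UN) auto
  finally show "{\<omega>\<in>space M. \<exists>n\<in>{1..N}. (1 + d) * I * real N \<le> \<Lambda> n \<omega>} \<in> events" .
  show "AE \<omega> in M. eventually (\<lambda>N. \<omega> \<notin> {\<omega>\<in>space M. \<exists>n\<in>{1..N}. (1 + d) * I * real N \<le> \<Lambda> n \<omega>}) sequentially"
    using limsup
    by eventually_elim (auto dest!: eventually_running_max_less[OF _ I d] elim!: eventually_mono simp: not_le)
qed

lemma (in prob_space) expected_hitting_time_le:
  fixes S :: "'a \<Rightarrow> enat" and X :: "nat \<Rightarrow> 'a \<Rightarrow> real"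
  assumes S: "S \<in> measurable M (count_space UNIV)"
    and X: "\<And>n. n \<ge> 1 \<Longrightarrow> X n \<in> borel_measurable M"
    and summable: "summable (\<lambda>n. prob {x\<in>space M. X n x / real n \<le> I - \<epsilon>})"
    and \<epsilon>: "0 < \<epsilon>" "\<epsilon> < I" and h: "h > 0"
    and hit: "\<And>x n. x \<in> space M \<Longrightarrow> n \<ge> 1 \<Longrightarrow> h \<le> X n x \<Longrightarrow> S x \<le> enat n"
  shows "(\<integral>\<^sup>+x. ennreal_of_enat (S x) \<partial>M)
      \<le> ennreal (h / (I - \<epsilon>) + 2 + (\<Sum>n. prob {x\<in>space M. X n x / real n \<le> I - \<epsilon>}))"
proof -
  define C where "C n = {x\<in>space M. X n x / real n \<le> I - \<epsilon>}" for n
  define t0 where "t0 = nat \<lceil>h / (I - \<epsilon>)\<rceil> + 1"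
  define g where "g t = (if t < t0 then 1 else 0) + prob (C t)" for t
  have g_sums: "g sums (real t0 + (\<Sum>t. prob (C t)))"
    using sums_add[OF sums_If_finite_set[of "{..<t0}" "\<lambda>_. 1 :: real"] summable_sums[OF summable]]
    by (simp add: g_def[abs_def] C_def)
  have tail_le: "emeasure M {x\<in>space M. enat t < S x} \<le> ennreal (g t)" for t
  proof (cases "t < t0")
    case True
    then show ?thesis
      by (simp add: g_def emeasure_eq_measure ennreal_leI add_increasing2)
  next
    case False
    have "h / (I - \<epsilon>) \<le> real (nat \<lceil>h / (I - \<epsilon>)\<rceil>)"
      by (rule real_nat_ceiling_ge)
    also have "\<dots> \<le> real t"
      using False by (simp only: of_nat_le_iff t0_def)
    finally have "h \<le> (I - \<epsilon>) * real t"
      using \<epsilon> by (simp add: pos_divide_le_eq mult.commute)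
    moreover have "t \<ge> 1"
      using False by (simp add: t0_def)
    ultimately have t: "t \<ge> 1" "h \<le> (I - \<epsilon>) * real t"
      by simp_all
    note X[OF t(1), measurable]
    have "{x\<in>space M. enat t < S x} \<subseteq> C t"
      using t hit[of _ t] \<epsilon> by (force simp: C_def field_simps not_le)
    moreover have "C t \<in> events"
      unfolding C_def by measurable
    ultimately have "emeasure M {x\<in>space M. enat t < S x} \<le> emeasure M (C t)"
      by (rule emeasure_mono)
    then show ?thesis
      by (simp add: g_def emeasure_eq_measure False)
  qed
  have "(\<integral>\<^sup>+x. ennreal_of_enat (S x) \<partial>M) = (\<Sum>t. emeasure M {x\<in>space M. enat t < S x})"
    using nn_integral_enat_function[OF S] by (simp add: of_nat_eq_enat)
  also have "\<dots> \<le> (\<Sum>t. ennreal (g t))"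
    by (intro suminf_le summableI tail_le)
  also have "\<dots> = ennreal (real t0 + (\<Sum>t. prob (C t)))"
    using g_sums by (subst suminf_ennreal2) (auto simp: g_def sums_iff)
  also have "\<dots> \<le> ennreal (h / (I - \<epsilon>) + 2 + (\<Sum>t. prob (C t)))"
    using h \<epsilon> by (intro ennreal_leI) (simp add: t0_def, linarith)
  finally show ?thesis
    by (simp add: C_def)
qed

lemma sample_size_bounds:
  fixes I d L :: real
  assumes I: "I > 0" and d: "0 < d" "d < 1/6" and L: "L \<ge> I / d"
  defines "N \<equiv> nat \<lfloor>(1 - d) * L / ((1 + d) * I)\<rfloor>"
  shows "(1 + d) * I * real N \<le> (1 - d) * L" and "real N \<ge> (1 - 3*d) * (L / I)"
proof -
  define x where "x = (1 - d) * L / ((1 + d) * I)"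
  have L_pos: "L > 0"
    using L d I by (smt (verit) divide_pos_pos)
  have "x \<ge> 0"
    using d L_pos I by (simp add: x_def)
  then have N_x: "real N \<le> x" "x < real N + 1"
    unfolding N_def x_def[symmetric] by linarith+
  have "real N * ((1 + d) * I) \<le> x * ((1 + d) * I)"
    using N_x(1) d I by (intro mult_right_mono) auto
  also have "\<dots> = (1 - d) * L"
    using d I by (simp add: x_def)
  finally show "(1 + d) * I * real N \<le> (1 - d) * L"
    by (simp add: algebra_simps)
  have "(1 - 2*d) * (1 + d) \<le> 1 - d"
    using d by (simp add: algebra_simps)
  then have "1 - 2*d \<le> (1 - d) / (1 + d)"
    using d by (simp add: pos_le_divide_eq)
  then have "(1 - 2*d) * (L / I) \<le> ((1 - d) / (1 + d)) * (L / I)"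
    using L_pos I by (intro mult_right_mono) auto
  then have "(1 - 2*d) * (L / I) \<le> x"
    by (simp add: x_def)
  moreover have "d * L / I \<ge> 1"
    using L d I by (simp add: field_simps)
  moreover have "(1 - 3*d) * (L / I) = (1 - 2*d) * (L / I) - d * L / I"
    by (simp add: algebra_simps)
  ultimately show "real N \<ge> (1 - 3*d) * (L / I)"
    using N_x by linarith
qed

lemma lower_bound_parameter_choice:
  fixes p :: "nat \<Rightarrow> real"
  assumes p: "p \<longlonglongrightarrow> 0" and I: "I > 0" and \<delta>: "0 < \<delta>" "\<delta> < 1"
  obtains \<alpha>0 where "\<alpha>0 > 0"
    and "\<And>\<alpha> \<beta>. 0 < \<alpha> \<Longrightarrow> \<alpha> < \<alpha>0 \<Longrightarrow> \<beta> < \<alpha>0 \<Longrightarrow>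
           \<exists>N. (1 - \<delta>) * \<bar>ln \<alpha>\<bar> / I \<le> real N * (1 - \<beta> - exp ((1 + \<delta>/6) * I * real N) * \<alpha> - p N)"
proof -
  define d where "d = \<delta> / 6"
  have d: "0 < d" "d < 1/6"
    using \<delta> by (auto simp: d_def)
  obtain N1 where N1: "\<And>N. N \<ge> N1 \<Longrightarrow> p N < d"
    using order_tendstoD(2)[OF p d(1)] by (auto simp: eventually_sequentially)
  define L0 where "L0 = max (max (- ln d / d) (real N1 * I / (1 - 3*d))) (I / d)"
  show ?thesis
  proof (rule that[of "min d (exp (- L0))"])
    show "min d (exp (- L0)) > 0"
      using d by simp
    fix \<alpha> \<beta> :: real
    assume \<alpha>: "0 < \<alpha>" "\<alpha> < min d (exp (- L0))" and \<beta>: "\<beta> < min d (exp (- L0))"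
    define L where "L = - ln \<alpha>"
    have "ln \<alpha> < ln (exp (- L0))"
      using \<alpha> by (subst ln_less_cancel_iff) auto
    then have L: "L \<ge> - ln d / d" "L \<ge> real N1 * I / (1 - 3*d)" "L \<ge> I / d"
      by (auto simp: L_def L0_def)
    txt \<open>N is chosen so that e^((1+d) I N) alpha <= alpha^d, while N is still close to L / I.\<close>
    define N where "N = nat \<lfloor>(1 - d) * L / ((1 + d) * I)\<rfloor>"
    note N = sample_size_bounds[OF I d L(3), folded N_def]
    have "exp ((1 + d) * I * real N) * \<alpha> \<le> exp ((1 - d) * L + ln \<alpha>)"
      using N(1) \<alpha> by (simp add: exp_add)
    also have "\<dots> = exp (- d * L)"
      by (simp add: L_def algebra_simps)
    also have "\<dots> \<le> exp (ln d)"
    proof -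
      have "- ln d \<le> L * d"
        using mult_right_mono[OF L(1), of d] d by simp
      then show ?thesis
        by (simp add: mult.commute)
    qed
    also have "\<dots> = d"
      using d by simp
    finally have exp_small: "exp ((1 + d) * I * real N) * \<alpha> \<le> d" .
    have "I / d > 0"
      using d I by simp
    then have LI: "L / I \<ge> 0"
      using L(3) I by simp
    have "real N1 \<le> (1 - 3*d) * (L / I)"
      using L(2) d I by (simp add: field_simps)
    then have p_small: "p N < d"
      using N(2) by (intro N1) linarith
    have "(1 - \<delta>) * \<bar>ln \<alpha>\<bar> / I = (1 - 6*d) * (L / I)"
      using \<alpha> d by (simp add: d_def L_def)
    also have "\<dots> \<le> (1 - 3*d) * (1 - 3*d) * (L / I)"
      using LI by (intro mult_right_mono) (auto simp: algebra_simps)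
    also have "\<dots> = ((1 - 3*d) * (L / I)) * (1 - 3*d)"
      by simp
    also have "\<dots> \<le> real N * (1 - \<beta> - exp ((1 + d) * I * real N) * \<alpha> - p N)"
      using N(2) exp_small p_small \<beta> d LI by (intro mult_mono) auto
    finally show "\<exists>N. (1 - \<delta>) * \<bar>ln \<alpha>\<bar> / I
        \<le> real N * (1 - \<beta> - exp ((1 + \<delta>/6) * I * real N) * \<alpha> - p N)"
      by (auto simp: d_def)
  qed
qed

lemma upper_bound_arith:
  fixes I \<delta> h L C :: real
  assumes I: "I > 0" and \<delta>: "0 < \<delta>" "\<delta> < 1" and h: "h \<le> (1 + \<delta>/8) * L"
    and L: "L \<ge> 2 * I * (2 + \<bar>C\<bar>) / \<delta>" "L \<ge> 0"
  shows "h / (I - I * \<delta> / 8) + 2 + C \<le> (1 + \<delta>) * L / I"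
proof -
  have "(1 + \<delta>/2) * (1 - \<delta>/8) - (1 + \<delta>/8) = \<delta>/4 - \<delta> * \<delta> / 16"
    by (simp add: field_simps)
  moreover have "\<delta> * \<delta> \<le> \<delta> * 1"
    using \<delta> by (intro mult_left_mono) auto
  ultimately have "1 + \<delta>/8 \<le> (1 + \<delta>/2) * (1 - \<delta>/8)"
    using \<delta> by linarith
  then have ratio: "(1 + \<delta>/8) / (1 - \<delta>/8) \<le> 1 + \<delta>/2"
    using \<delta> by (simp add: pos_divide_le_eq)
  have "h / (I - I * \<delta> / 8) \<le> (1 + \<delta>/8) * L / (I * (1 - \<delta>/8))"
    using h I \<delta> by (simp add: algebra_simps divide_right_mono)
  also have "\<dots> = ((1 + \<delta>/8) / (1 - \<delta>/8)) * (L / I)"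
    by simp
  also have "\<dots> \<le> (1 + \<delta>/2) * (L / I)"
    using ratio L(2) I by (intro mult_right_mono) auto
  finally have "h / (I - I * \<delta> / 8) \<le> (1 + \<delta>/2) * (L / I)" .
  moreover have "2 + \<bar>C\<bar> \<le> (\<delta>/2) * (L / I)"
    using L(1) \<delta> I by (simp add: field_simps)
  moreover have "(1 + \<delta>/2) * (L / I) + (\<delta>/2) * (L / I) = (1 + \<delta>) * L / I"
    using I by (simp add: field_simps)
  ultimately show ?thesis
    by linarith
qed

lemma asymp_equiv_enn2real_sandwich:
  fixes f :: "'x \<Rightarrow> ennreal" and g :: "'x \<Rightarrow> real"
  assumes g: "eventually (\<lambda>x. g x > 0) F"
    and lower: "\<And>\<delta>. 0 < \<delta> \<Longrightarrow> \<delta> < 1 \<Longrightarrow> eventually (\<lambda>x. ennreal ((1 - \<delta>) * g x) \<le> f x) F"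
    and upper: "\<And>\<delta>. 0 < \<delta> \<Longrightarrow> \<delta> < 1 \<Longrightarrow> eventually (\<lambda>x. f x \<le> ennreal ((1 + \<delta>) * g x)) F"
  shows "(\<lambda>x. enn2real (f x)) \<sim>[F] g"
proof (rule asymp_equivI')
  show "((\<lambda>x. enn2real (f x) / g x) \<longlongrightarrow> 1) F"
  proof (rule tendstoI)
    fix e :: real assume e: "e > 0"
    define \<delta> where "\<delta> = min (e/2) (1/2)"
    have \<delta>: "0 < \<delta>" "\<delta> < 1" "\<delta> < e"
      using e by (auto simp: \<delta>_def)
    from g lower[OF \<delta>(1,2)] upper[OF \<delta>(1,2)]
    show "eventually (\<lambda>x. dist (enn2real (f x) / g x) 1 < e) F"
    proof eventually_elim
      case (elim x)
      have fin: "f x < \<top>"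
        using elim(3) ennreal_less_top by (rule le_less_trans)
      have "(1 - \<delta>) * g x \<le> enn2real (f x)"
        using enn2real_mono[OF elim(2) fin] elim(1) \<delta> by simp
      moreover have "enn2real (f x) \<le> (1 + \<delta>) * g x"
        using enn2real_mono[OF elim(3)] elim(1) \<delta> by simp
      ultimately have "\<bar>enn2real (f x) / g x - 1\<bar> \<le> \<delta>"
        using elim(1) by (simp add: abs_le_iff field_simps)
      then show ?case
        using \<delta> by (simp add: dist_real_def)
    qed
  qed
qed

section \<open>Wald's change of measure and the lower bound\<close>

locale likelihood_ratio_process =
  fixes PA PB :: "'b measure" and G :: "nat \<Rightarrow> 'b measure" and \<Lambda> :: "nat \<Rightarrow> 'b \<Rightarrow> real"
  assumes prob_space_A: "prob_space PA" and prob_space_B: "prob_space PB"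
    and sets_B: "sets PB = sets PA"
    and subalgebra_G: "\<And>n. subalgebra PA (G n)"
    and measurable_\<Lambda>: "\<And>n. n \<ge> 1 \<Longrightarrow> \<Lambda> n \<in> borel_measurable (G n)"
    and change_of_measure: "\<And>n E. n \<ge> 1 \<Longrightarrow> E \<in> sets (G n) \<Longrightarrow>
        emeasure PA E = (\<integral>\<^sup>+\<omega>. ennreal (exp (\<Lambda> n \<omega>)) * indicator E \<omega> \<partial>PB)"
begin

sublocale A: prob_space PA
  by (rule prob_space_A)

sublocale B: prob_space PB
  by (rule prob_space_B)

lemma sets_G_subset: "sets (G n) \<subseteq> sets PA"
  using subalgebra_G by (simp add: subalgebra_def)

lemma measurable_\<Lambda>_A: "n \<ge> 1 \<Longrightarrow> \<Lambda> n \<in> borel_measurable PA"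
  by (rule measurable_from_subalg[OF subalgebra_G measurable_\<Lambda>])

lemma space_G: "space (G n) = space PA"
  using subalgebra_G by (simp add: subalgebra_def)

lemma prob_stop_below_level_le:
  fixes T :: "'b \<Rightarrow> enat" and D :: "'b \<Rightarrow> bool"
  assumes adapted: "\<And>n. n \<ge> 1 \<Longrightarrow> Measurable.pred (G n) (\<lambda>\<omega>. T \<omega> = enat n \<and> D \<omega>)"
    and D_meas: "Measurable.pred PA D"
  shows "A.prob (\<Union>n\<in>{1..N}. {\<omega>\<in>space PA. T \<omega> = enat n \<and> D \<omega> \<and> \<Lambda> n \<omega> < c})
    \<le> exp c * B.prob {\<omega>\<in>space PB. D \<omega>}"
proof -
  define H where "H n = {\<omega>\<in>space PA. T \<omega> = enat n \<and> D \<omega>}" for n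
  define F where "F n = {\<omega>\<in>space PA. T \<omega> = enat n \<and> D \<omega> \<and> \<Lambda> n \<omega> < c}" for n
  have H_G: "H n \<in> sets (G n)" if "n \<ge> 1" for n
    using adapted[OF that] by (simp add: pred_def space_G H_def)
  have F_G: "F n \<in> sets (G n)" if "n \<ge> 1" for n
  proof -
    note measurable_\<Lambda>[OF that, measurable]
    have "{\<omega>\<in>space (G n). \<Lambda> n \<omega> < c} \<in> sets (G n)"
      by measurable
    moreover have "F n = H n \<inter> {\<omega>\<in>space (G n). \<Lambda> n \<omega> < c}"
      by (auto simp: F_def H_def space_G)
    ultimately show ?thesis
      using H_G[OF that] by auto
  qed
  have H_B: "H n \<in> sets PB" and F_A: "F n \<in> A.events" if "n \<ge> 1" for n
    using H_G[OF that] F_G[OF that] sets_G_subset sets_B by auto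
  have "emeasure PA (\<Union>n\<in>{1..N}. F n) \<le> (\<Sum>n\<in>{1..N}. emeasure PA (F n))"
    using F_A by (intro emeasure_subadditive_finite) auto
  also have "\<dots> = (\<Sum>n\<in>{1..N}. \<integral>\<^sup>+\<omega>. ennreal (exp (\<Lambda> n \<omega>)) * indicator (F n) \<omega> \<partial>PB)"
    using change_of_measure F_G by (intro sum.cong) auto
  also have "\<dots> \<le> (\<Sum>n\<in>{1..N}. \<integral>\<^sup>+\<omega>. ennreal (exp c) * indicator (H n) \<omega> \<partial>PB)"
    by (intro sum_mono nn_integral_mono) (auto simp: F_def H_def indicator_def intro: ennreal_leI)
  also have "\<dots> = ennreal (exp c) * (\<Sum>n\<in>{1..N}. emeasure PB (H n))"
    unfolding sum_distrib_left using H_B by (intro sum.cong refl nn_integral_cmult_indicator) auto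
  also have "(\<Sum>n\<in>{1..N}. emeasure PB (H n)) = emeasure PB (\<Union>n\<in>{1..N}. H n)"
    using H_B by (intro sum_emeasure) (auto simp: disjoint_family_on_def H_def)
  also have "ennreal (exp c) * emeasure PB (\<Union>n\<in>{1..N}. H n) \<le> ennreal (exp c) * emeasure PB {\<omega>\<in>space PB. D \<omega>}"
    using D_meas by (intro mult_left_mono emeasure_mono)
      (auto simp: H_def pred_def sets_B sets_eq_imp_space_eq[OF sets_B])
  finally show ?thesis
    by (simp add: A.emeasure_eq_measure B.emeasure_eq_measure ennreal_mult'[symmetric] F_def)
qed

lemma expected_time_ge:
  fixes T :: "'b \<Rightarrow> enat" and D :: "'b \<Rightarrow> bool"
  assumes T_pos: "\<And>\<omega>. \<omega> \<in> space PA \<Longrightarrow> T \<omega> \<noteq> 0"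
    and adapted: "\<And>n. n \<ge> 1 \<Longrightarrow> Measurable.pred (G n) (\<lambda>\<omega>. T \<omega> = enat n \<and> D \<omega>)"
    and D_meas: "Measurable.pred PA D"
    and err_B: "measure PB {\<omega>\<in>space PB. D \<omega>} \<le> \<alpha>"
    and err_A: "measure PA {\<omega>\<in>space PA. \<not> D \<omega>} \<le> \<beta>"
  shows "ennreal (real N * (1 - \<beta> - exp c * \<alpha> - A.prob {\<omega>\<in>space PA. \<exists>n\<in>{1..N}. c \<le> \<Lambda> n \<omega>}))
    \<le> (\<integral>\<^sup>+\<omega>. ennreal_of_enat (T \<omega>) \<partial>PA)"
proof -
  define Below where "Below = (\<Union>n\<in>{1..N}. {\<omega>\<in>space PA. T \<omega> = enat n \<and> D \<omega> \<and> \<Lambda> n \<omega> < c})"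
  define Exc where "Exc = {\<omega>\<in>space PA. \<exists>n\<in>{1..N}. c \<le> \<Lambda> n \<omega>}"
  define Early where "Early = {\<omega>\<in>space PA. \<not> D \<omega>} \<union> (\<Union>n\<in>{1..N}. {\<omega>\<in>space PA. T \<omega> = enat n \<and> D \<omega>})"
  have stop_A: "{\<omega>\<in>space PA. T \<omega> = enat n \<and> D \<omega>} \<in> A.events"
      "{\<omega>\<in>space PA. T \<omega> = enat n \<and> D \<omega> \<and> \<Lambda> n \<omega> < c} \<in> A.events" if "n \<ge> 1" for n
  proof -
    have "{\<omega>\<in>space PA. T \<omega> = enat n \<and> D \<omega>} \<in> sets (G n)"
      using adapted[OF that] by (simp add: pred_def space_G)
    then show stop: "{\<omega>\<in>space PA. T \<omega> = enat n \<and> D \<omega>} \<in> A.events"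
      using sets_G_subset by auto
    have "{\<omega>\<in>space PA. \<Lambda> n \<omega> < c} \<in> A.events"
      using measurable_\<Lambda>_A[OF that] by measurable
    moreover have "{\<omega>\<in>space PA. T \<omega> = enat n \<and> D \<omega> \<and> \<Lambda> n \<omega> < c}
        = {\<omega>\<in>space PA. T \<omega> = enat n \<and> D \<omega>} \<inter> {\<omega>\<in>space PA. \<Lambda> n \<omega> < c}"
      by auto
    ultimately show "{\<omega>\<in>space PA. T \<omega> = enat n \<and> D \<omega> \<and> \<Lambda> n \<omega> < c} \<in> A.events"
      using stop by auto
  qed
  note D_meas[measurable]
  have notD: "{\<omega>\<in>space PA. \<not> D \<omega>} \<in> A.events"
    by measurable
  have "Exc = (\<Union>n\<in>{1..N}. {\<omega>\<in>space PA. c \<le> \<Lambda> n \<omega>})"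
    by (auto simp: Exc_def)
  then have events: "Below \<in> A.events" "Exc \<in> A.events" "Early \<in> A.events"
    using stop_A measurable_\<Lambda>_A notD unfolding Below_def Early_def
    by (auto intro!: sets.finite_UN sets.Un)
  have "A.prob Below \<le> exp c * B.prob {\<omega>\<in>space PB. D \<omega>}"
    unfolding Below_def by (rule prob_stop_below_level_le[OF adapted D_meas])
  also have "\<dots> \<le> exp c * \<alpha>"
    using err_B by (intro mult_left_mono) auto
  finally have "A.prob Below \<le> exp c * \<alpha>" .
  moreover have "Early \<subseteq> {\<omega>\<in>space PA. \<not> D \<omega>} \<union> (Below \<union> Exc)"
    unfolding Early_def Below_def Exc_def by (auto simp: not_less)
  then have "A.prob Early \<le> A.prob ({\<omega>\<in>space PA. \<not> D \<omega>} \<union> (Below \<union> Exc))"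
    using notD events by (intro A.finite_measure_mono) auto
  moreover have "A.prob ({\<omega>\<in>space PA. \<not> D \<omega>} \<union> (Below \<union> Exc))
      \<le> A.prob {\<omega>\<in>space PA. \<not> D \<omega>} + (A.prob Below + A.prob Exc)"
    using notD events by (intro measure_Un_le[THEN order_trans] add_left_mono measure_Un_le) auto
  ultimately have Early_small: "A.prob Early \<le> \<beta> + exp c * \<alpha> + A.prob Exc"
    using err_A by linarith
  have late: "real N \<le> ennreal_of_enat (T \<omega>)" if "\<omega> \<in> space PA - Early" for \<omega>
  proof (cases "T \<omega>")
    case (enat m)
    have "m \<noteq> 0"
      using T_pos[of \<omega>] that enat by (auto simp: zero_enat_def)
    moreover have "m \<notin> {1..N}"
      using that enat by (auto simp: Early_def)
    ultimately have "N < m"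
      by auto
    then show ?thesis
      using enat by (simp add: ennreal_of_nat_eq_real_of_nat[symmetric])
  qed simp
  have "ennreal (real N * (1 - \<beta> - exp c * \<alpha> - A.prob Exc)) \<le> ennreal (real N * (1 - A.prob Early))"
    using Early_small by (intro ennreal_leI mult_left_mono) auto
  also have "\<dots> = ennreal (real N) * emeasure PA (space PA - Early)"
    using events(3) by (simp add: A.emeasure_eq_measure A.prob_compl ennreal_mult)
  also have "\<dots> = (\<integral>\<^sup>+\<omega>. ennreal (real N) * indicator (space PA - Early) \<omega> \<partial>PA)"
    using events(3) by (intro nn_integral_cmult_indicator[symmetric]) auto
  also have "\<dots> \<le> (\<integral>\<^sup>+\<omega>. ennreal_of_enat (T \<omega>) \<partial>PA)"
    using late by (intro nn_integral_mono) (auto simp: indicator_def)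
  finally show ?thesis
    by (simp add: Exc_def)
qed

lemma expected_time_lower_bound:
  assumes limsup: "AE \<omega> in PA. limsup (\<lambda>n. ereal (\<Lambda> n \<omega> / real n)) \<le> ereal I"
    and I: "I > 0" and \<delta>: "0 < \<delta>" "\<delta> < 1"
  obtains \<alpha>0 where "\<alpha>0 > 0"
    and "\<And>\<alpha> \<beta> T D. 0 < \<alpha> \<Longrightarrow> \<alpha> < \<alpha>0 \<Longrightarrow> \<beta> < \<alpha>0 \<Longrightarrow>
      (\<And>\<omega>. \<omega> \<in> space PA \<Longrightarrow> T \<omega> \<noteq> 0) \<Longrightarrow>
      (\<And>n. n \<ge> 1 \<Longrightarrow> Measurable.pred (G n) (\<lambda>\<omega>. T \<omega> = enat n \<and> D \<omega>)) \<Longrightarrow>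
      Measurable.pred PA D \<Longrightarrow>
      measure PB {\<omega>\<in>space PB. D \<omega>} \<le> \<alpha> \<Longrightarrow> measure PA {\<omega>\<in>space PA. \<not> D \<omega>} \<le> \<beta> \<Longrightarrow>
      ennreal ((1 - \<delta>) * \<bar>ln \<alpha>\<bar> / I) \<le> (\<integral>\<^sup>+\<omega>. ennreal_of_enat (T \<omega>) \<partial>PA)"
proof -
  define p where "p N = A.prob {\<omega>\<in>space PA. \<exists>n\<in>{1..N}. (1 + \<delta>/6) * I * real N \<le> \<Lambda> n \<omega>}" for N
  have "p \<longlonglongrightarrow> 0"
    unfolding p_def[abs_def] using \<delta>
    by (intro A.prob_running_max_exceeds_tendsto_0 measurable_\<Lambda>_A limsup I) auto
  from lower_bound_parameter_choice[OF this I \<delta>] obtain \<alpha>0 where \<alpha>0: "\<alpha>0 > 0"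
    and choice: "\<And>\<alpha> \<beta>. 0 < \<alpha> \<Longrightarrow> \<alpha> < \<alpha>0 \<Longrightarrow> \<beta> < \<alpha>0 \<Longrightarrow>
      \<exists>N. (1 - \<delta>) * \<bar>ln \<alpha>\<bar> / I \<le> real N * (1 - \<beta> - exp ((1 + \<delta>/6) * I * real N) * \<alpha> - p N)"
    by blast
  show ?thesis
  proof (rule that[OF \<alpha>0])
    fix \<alpha> \<beta> :: real and T :: "'b \<Rightarrow> enat" and D
    assume \<alpha>\<beta>: "0 < \<alpha>" "\<alpha> < \<alpha>0" "\<beta> < \<alpha>0"
      and T: "\<And>\<omega>. \<omega> \<in> space PA \<Longrightarrow> T \<omega> \<noteq> 0"
      and adapted: "\<And>n. n \<ge> 1 \<Longrightarrow> Measurable.pred (G n) (\<lambda>\<omega>. T \<omega> = enat n \<and> D \<omega>)"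
      and D: "Measurable.pred PA D"
      and err: "measure PB {\<omega>\<in>space PB. D \<omega>} \<le> \<alpha>" "measure PA {\<omega>\<in>space PA. \<not> D \<omega>} \<le> \<beta>"
    obtain N where "(1 - \<delta>) * \<bar>ln \<alpha>\<bar> / I \<le> real N * (1 - \<beta> - exp ((1 + \<delta>/6) * I * real N) * \<alpha> - p N)"
      using choice[OF \<alpha>\<beta>] by blast
    then have "ennreal ((1 - \<delta>) * \<bar>ln \<alpha>\<bar> / I)
        \<le> ennreal (real N * (1 - \<beta> - exp ((1 + \<delta>/6) * I * real N) * \<alpha> - p N))"
      by (rule ennreal_leI)
    also have "\<dots> \<le> (\<integral>\<^sup>+\<omega>. ennreal_of_enat (T \<omega>) \<partial>PA)"
      unfolding p_def by (rule expected_time_ge[OF T adapted D err])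
    finally show "ennreal ((1 - \<delta>) * \<bar>ln \<alpha>\<bar> / I) \<le> (\<integral>\<^sup>+\<omega>. ennreal_of_enat (T \<omega>) \<partial>PA)" .
  qed
qed

end

section \<open>The path space model\<close>

lemma space_path_space: "space (path_space S) = (\<Pi>\<^sub>E i\<in>{1..}. space S)"
  by (simp add: path_space_def space_PiM)

lemma measurable_restrict_path: "(\<lambda>x. restrict x {1..n}) \<in> measurable (path_space S) (PiM {1..n} (\<lambda>_. S))"
  unfolding path_space_def by (rule measurable_restrict_subset) auto

lemma subalgebra_stream_filt:
  assumes "sets N = sets (path_space S)"
  shows "subalgebra N (stream_filt S n)"
  using sets_vimage_algebra_subset[OF measurable_restrict_path[of n S]] assms sets_eq_imp_space_eq[OF assms]
  by (simp add: subalgebra_def stream_filt_def)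

lemma space_local_filt: "space (local_filt K M k t) = space (joint_space K M)"
  by (simp add: local_filt_def)

lemma space_global_filt: "space (global_filt K M t) = space (joint_space K M)"
  by (simp add: global_filt_def)

lemma component_in_path_space:
  "\<omega> \<in> space (joint_space K M) \<Longrightarrow> k \<in> {1..K} \<Longrightarrow> \<omega> k \<in> space (path_space (M k))"
  by (auto simp: joint_space_def space_PiM)

lemma measurable_component_joint:
  "k \<in> {1..K} \<Longrightarrow> (\<lambda>\<omega>. \<omega> k) \<in> measurable (joint_space K M) (path_space (M k))"
  unfolding joint_space_def by (rule measurable_component_singleton) simp

lemma measurable_restrict_local:
  assumes k: "k \<in> {1..K}" and nt: "n \<le> t"
  shows "(\<lambda>\<omega>. restrict (\<omega> k) {1..n}) \<in> measurable (local_filt K M k t) (PiM {1..n} (\<lambda>_. M k))"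
proof -
  have "(\<lambda>\<omega>. restrict (\<omega> k) {1..t}) \<in> measurable (local_filt K M k t) (PiM {1..t} (\<lambda>_. M k))"
    unfolding local_filt_def
  proof (rule measurable_vimage_algebra1)
    show "(\<lambda>\<omega>. restrict (\<omega> k) {1..t}) \<in> space (joint_space K M) \<rightarrow> space (PiM {1..t} (\<lambda>_. M k))"
      using component_in_path_space[of _ K M, OF _ k] by (auto simp: space_path_space space_PiM PiE_iff)
  qed
  from measurable_comp[OF this measurable_restrict_subset[of "{1..n}" "{1..t}"]] nt
  show ?thesis
    by (simp add: comp_def)
qed

lemma measurable_component_local:
  assumes k: "k \<in> {1..K}" and nt: "n \<le> t"
  shows "(\<lambda>\<omega>. \<omega> k) \<in> measurable (local_filt K M k t) (stream_filt (M k) n)"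
  unfolding stream_filt_def
proof (rule measurable_vimage_algebra2)
  show "(\<lambda>\<omega>. \<omega> k) \<in> space (local_filt K M k t) \<rightarrow> space (path_space (M k))"
    using component_in_path_space[of _ K M, OF _ k] by (auto simp: space_local_filt)
  show "(\<lambda>\<omega>. restrict (\<omega> k) {1..n}) \<in> measurable (local_filt K M k t) (PiM {1..n} (\<lambda>_. M k))"
    by (rule measurable_restrict_local[OF k nt])
qed

lemma sets_local_filt_mono:
  assumes k: "k \<in> {1..K}" and tt: "t \<le> t'"
  shows "sets (local_filt K M k t) \<subseteq> sets (local_filt K M k t')"
  using sets_vimage_algebra_subset[OF measurable_restrict_local[OF k tt]]
  by (simp add: local_filt_def[of K M k t] space_local_filt)

lemma filtration_local_filt: "k \<in> {1..K} \<Longrightarrow> filtration (space (joint_space K M)) (local_filt K M k)"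
  by unfold_locales (auto simp: space_local_filt sets_local_filt_mono)

lemma sets_local_filt_subset_joint:
  assumes k: "k \<in> {1..K}"
  shows "sets (local_filt K M k t) \<subseteq> sets (joint_space K M)"
proof -
  have "(\<lambda>\<omega>. restrict (\<omega> k) {1..t}) \<in> measurable (joint_space K M) (PiM {1..t} (\<lambda>_. M k))"
    using measurable_comp[OF measurable_component_joint[OF k] measurable_restrict_path]
    by (simp add: comp_def)
  then show ?thesis
    unfolding local_filt_def by (rule sets_vimage_algebra_subset)
qed

lemma measurable_restrict_global:
  assumes "t \<le> t'"
  shows "(\<lambda>\<omega>. \<lambda>k\<in>{1..K}. restrict (\<omega> k) {1..t})
    \<in> measurable (global_filt K M t') (PiM {1..K} (\<lambda>k. PiM {1..t} (\<lambda>_. M k)))"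
proof -
  have "(\<lambda>\<omega>. \<lambda>k\<in>{1..K}. restrict (\<omega> k) {1..t'})
      \<in> measurable (global_filt K M t') (PiM {1..K} (\<lambda>k. PiM {1..t'} (\<lambda>_. M k)))"
    unfolding global_filt_def
  proof (rule measurable_vimage_algebra1)
    show "(\<lambda>\<omega>. \<lambda>k\<in>{1..K}. restrict (\<omega> k) {1..t'})
        \<in> space (joint_space K M) \<rightarrow> space (PiM {1..K} (\<lambda>k. PiM {1..t'} (\<lambda>_. M k)))"
      using component_in_path_space[of _ K M] by (force simp: space_path_space space_PiM PiE_iff)
  qed
  moreover have "(\<lambda>y. \<lambda>k\<in>{1..K}. restrict (y k) {1..t})
      \<in> measurable (PiM {1..K} (\<lambda>k. PiM {1..t'} (\<lambda>_. M k))) (PiM {1..K} (\<lambda>k. PiM {1..t} (\<lambda>_. M k)))"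
  proof (rule measurable_restrict)
    fix i assume "i \<in> {1..K}"
    from measurable_comp[OF measurable_component_singleton[OF this, of "\<lambda>k. PiM {1..t'} (\<lambda>_. M k)"]
        measurable_restrict_subset[of "{1..t}" "{1..t'}" "\<lambda>_. M i"]] assms
    show "(\<lambda>y. restrict (y i) {1..t}) \<in> measurable (PiM {1..K} (\<lambda>k. PiM {1..t'} (\<lambda>_. M k))) (PiM {1..t} (\<lambda>_. M i))"
      by (simp add: comp_def)
  qed
  note m = measurable_comp[OF calculation this]
  have eq: "(\<lambda>y. \<lambda>k\<in>{1..K}. restrict (y k) {1..t}) \<circ> (\<lambda>\<omega>. \<lambda>k\<in>{1..K}. restrict (\<omega> k) {1..t'})
      = (\<lambda>\<omega>. \<lambda>k\<in>{1..K}. restrict (\<omega> k) {1..t})"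
    using assms by (auto simp: fun_eq_iff restrict_def)
  show ?thesis
    using m unfolding eq .
qed

lemma sets_global_filt_mono:
  "t \<le> t' \<Longrightarrow> sets (global_filt K M t) \<subseteq> sets (global_filt K M t')"
  using sets_vimage_algebra_subset[OF measurable_restrict_global]
  by (simp add: global_filt_def[of K M t] space_global_filt)

lemma filtration_global_filt: "filtration (space (joint_space K M)) (global_filt K M)"
  by unfold_locales (auto simp: space_global_filt sets_global_filt_mono)

lemma sets_local_filt_subset_global:
  assumes k: "k \<in> {1..K}"
  shows "sets (local_filt K M k t) \<subseteq> sets (global_filt K M t)"
proof -
  have "(\<lambda>y. y k) \<circ> (\<lambda>\<omega>. \<lambda>k\<in>{1..K}. restrict (\<omega> k) {1..t}) \<in> measurable (global_filt K M t) (PiM {1..t} (\<lambda>_. M k))"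
    using k by (intro measurable_comp[OF measurable_restrict_global measurable_component_singleton]) auto
  then have "(\<lambda>\<omega>. restrict (\<omega> k) {1..t}) \<in> measurable (global_filt K M t) (PiM {1..t} (\<lambda>_. M k))"
    using k by (simp add: comp_def)
  then show ?thesis
    unfolding local_filt_def space_global_filt[symmetric, of K M t] by (rule sets_vimage_algebra_subset)
qed

lemma pred_local_global:
  assumes k: "k \<in> {1..K}" and P: "Measurable.pred (local_filt K M k t) P"
  shows "Measurable.pred (global_filt K M t) P"
proof -
  have "subalgebra (global_filt K M t) (local_filt K M k t)"
    using sets_local_filt_subset_global[OF k] by (simp add: subalgebra_def space_local_filt space_global_filt)
  then show ?thesis
    using P by (rule measurable_from_subalg)
qed

section \<open>Log-likelihood ratios of the streams\<close>

locale llr_streams =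
  fixes K :: nat and M :: "nat \<Rightarrow> 'a measure"
    and P0 P1 :: "nat \<Rightarrow> (nat \<Rightarrow> 'a) measure"
    and lam :: "nat \<Rightarrow> nat \<Rightarrow> (nat \<Rightarrow> 'a) \<Rightarrow> real"
  assumes P0: "\<And>k. k \<in> {1..K} \<Longrightarrow> prob_space (P0 k) \<and> sets (P0 k) = sets (path_space (M k))"
    and P1: "\<And>k. k \<in> {1..K} \<Longrightarrow> prob_space (P1 k) \<and> sets (P1 k) = sets (path_space (M k))"
    and lam_meas: "\<And>k n. k \<in> {1..K} \<Longrightarrow> n \<ge> 1 \<Longrightarrow>
        lam k n \<in> borel_measurable (stream_filt (M k) n)"
    and lam_llr: "\<And>k n. k \<in> {1..K} \<Longrightarrow> n \<ge> 1 \<Longrightarrow>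
        density (restr_to_subalg (P0 k) (stream_filt (M k) n)) (\<lambda>x. ennreal (exp (lam k n x)))
          = restr_to_subalg (P1 k) (stream_filt (M k) n)"
begin

abbreviation \<Omega> where "\<Omega> \<equiv> space (joint_space K M)"

abbreviation PA where "PA A \<equiv> P_A K P0 P1 A"

definition law :: "nat set \<Rightarrow> nat \<Rightarrow> (nat \<Rightarrow> 'a) measure" where
  "law A k = (if k \<in> A then P1 k else P0 k)"

text \<open>The log-likelihood ratio of stream k oriented towards the hypothesis that stream k
  follows under P_A; it lets signal and noise streams be treated alike.\<close>
definition llr :: "nat set \<Rightarrow> nat \<Rightarrow> nat \<Rightarrow> (nat \<Rightarrow> 'a) \<Rightarrow> real" where
  "llr A k n x = (if k \<in> A then lam k n x else - lam k n x)"

lemma P_A_eq_PiM_law: "PA A = PiM {1..K} (law A)"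
  by (simp add: P_A_def law_def[abs_def])

lemma prob_space_law: "k \<in> {1..K} \<Longrightarrow> prob_space (law A k)"
  using P0 P1 by (simp add: law_def)

lemma sets_law: "k \<in> {1..K} \<Longrightarrow> sets (law A k) = sets (path_space (M k))"
  using P0 P1 by (simp add: law_def)

lemma prob_space_PA: "prob_space (PA A)"
  unfolding P_A_eq_PiM_law by (rule prob_space_PiM) (rule prob_space_law)

lemma sets_PA: "sets (PA A) = sets (joint_space K M)"
  unfolding P_A_eq_PiM_law joint_space_def by (rule sets_PiM_cong) (auto simp: sets_law)

lemma space_PA: "space (PA A) = \<Omega>"
  using sets_PA by (rule sets_eq_imp_space_eq)

lemma measurable_component_PA: "k \<in> {1..K} \<Longrightarrow> (\<lambda>\<omega>. \<omega> k) \<in> measurable (PA A) (law A k)"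
  unfolding P_A_eq_PiM_law by (rule measurable_component_singleton)

lemma distr_component_PA: "k \<in> {1..K} \<Longrightarrow> distr (PA A) (law A k) (\<lambda>\<omega>. \<omega> k) = law A k"
  unfolding P_A_eq_PiM_law by (rule distr_PiM_component) (auto intro: prob_space_law)

lemma AE_component_PA: "k \<in> {1..K} \<Longrightarrow> AE x in law A k. P x \<Longrightarrow> AE \<omega> in PA A. P (\<omega> k)"
  unfolding P_A_eq_PiM_law by (rule AE_PiM_component) (auto intro: prob_space_law)

lemma measure_component_PA:
  assumes k: "k \<in> {1..K}" and S: "S \<in> sets (path_space (M k))"
  shows "measure (PA A) {\<omega>\<in>\<Omega>. \<omega> k \<in> S} = measure (law A k) S"
proof -
  have "{\<omega>\<in>\<Omega>. \<omega> k \<in> S} = (\<lambda>\<omega>. \<omega> k) -` S \<inter> space (PA A)"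
    by (auto simp: space_PA)
  then show ?thesis
    using measure_distr[OF measurable_component_PA[OF k], of S] S k
    by (simp add: distr_component_PA sets_law)
qed

lemma subalgebra_local_filt_PA: "k \<in> {1..K} \<Longrightarrow> subalgebra (PA A) (local_filt K M k t)"
  using sets_local_filt_subset_joint[of k K M t] by (simp add: subalgebra_def sets_PA space_PA space_local_filt)

lemma pred_local_PA: "k \<in> {1..K} \<Longrightarrow> Measurable.pred (local_filt K M k t) P \<Longrightarrow> Measurable.pred (PA A) P"
  by (rule measurable_from_subalg[OF subalgebra_local_filt_PA])

lemma pred_PA_iff: "Measurable.pred (PA A) P \<longleftrightarrow> Measurable.pred (joint_space K M) P"
  by (simp add: measurable_cong_sets[OF sets_PA refl])

lemma measurable_lam_local:
  assumes "k \<in> {1..K}" "1 \<le> n" "n \<le> t"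
  shows "(\<lambda>\<omega>. lam k n (\<omega> k)) \<in> borel_measurable (local_filt K M k t)"
  using measurable_comp[OF measurable_component_local lam_meas] assms by (simp add: comp_def)

lemma measurable_lam_PA:
  assumes "k \<in> {1..K}" "1 \<le> n"
  shows "(\<lambda>\<omega>. lam k n (\<omega> k)) \<in> borel_measurable (PA A)"
  by (rule measurable_from_subalg[OF subalgebra_local_filt_PA measurable_lam_local[OF assms order_refl]])
    (rule assms)

lemma measurable_llr_local:
  assumes "k \<in> {1..K}" "1 \<le> n" "n \<le> t"
  shows "(\<lambda>\<omega>. llr A k n (\<omega> k)) \<in> borel_measurable (local_filt K M k t)"
  using measurable_lam_local[OF assms] by (simp add: llr_def)

lemma measurable_llr_PA:
  assumes "k \<in> {1..K}" "1 \<le> n"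
  shows "(\<lambda>\<omega>. llr A k n (\<omega> k)) \<in> borel_measurable (PA A)"
  using measurable_lam_PA[OF assms] by (simp add: llr_def)

lemma nn_integral_P1_stream:
  assumes k: "k \<in> {1..K}" and n: "n \<ge> 1" and g: "g \<in> borel_measurable (stream_filt (M k) n)"
  shows "(\<integral>\<^sup>+x. g x \<partial>P1 k) = (\<integral>\<^sup>+x. ennreal (exp (lam k n x)) * g x \<partial>P0 k)"
proof -
  note [measurable] = lam_meas[OF k n] g
  have sub0: "subalgebra (P0 k) (stream_filt (M k) n)" and sub1: "subalgebra (P1 k) (stream_filt (M k) n)"
    using P0[OF k] P1[OF k] by (auto intro: subalgebra_stream_filt)
  have "(\<integral>\<^sup>+x. g x \<partial>P1 k) = (\<integral>\<^sup>+x. g x \<partial>restr_to_subalg (P1 k) (stream_filt (M k) n))"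
    by (rule nn_integral_subalgebra2[OF sub1 g, symmetric])
  also have "\<dots> = (\<integral>\<^sup>+x. g x \<partial>density (restr_to_subalg (P0 k) (stream_filt (M k) n)) (\<lambda>x. ennreal (exp (lam k n x))))"
    by (simp add: lam_llr[OF k n])
  also have "\<dots> = (\<integral>\<^sup>+x. ennreal (exp (lam k n x)) * g x \<partial>restr_to_subalg (P0 k) (stream_filt (M k) n))"
    by (intro nn_integral_density measurable_in_subalg[OF sub0]) measurable
  also have "\<dots> = (\<integral>\<^sup>+x. ennreal (exp (lam k n x)) * g x \<partial>P0 k)"
    by (intro nn_integral_subalgebra2[OF sub0]) measurable
  finally show ?thesis .
qed

lemma emeasure_law_stream:
  assumes k: "k \<in> {1..K}" and n: "n \<ge> 1" and AB: "k \<in> A \<longleftrightarrow> k \<notin> B"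
    and S: "S \<in> sets (stream_filt (M k) n)"
  shows "emeasure (law A k) S = (\<integral>\<^sup>+x. ennreal (exp (llr A k n x)) * indicator S x \<partial>law B k)"
proof -
  note [measurable] = lam_meas[OF k n] S
  have S_path: "S \<in> sets (path_space (M k))"
    using subalgebra_stream_filt[OF refl, of "M k" n] S by (auto simp: subalgebra_def)
  show ?thesis
  proof (cases "k \<in> A")
    case True
    have "emeasure (P1 k) S = (\<integral>\<^sup>+x. indicator S x \<partial>P1 k)"
      using S_path P1[OF k] by simp
    also have "\<dots> = (\<integral>\<^sup>+x. ennreal (exp (lam k n x)) * indicator S x \<partial>P0 k)"
      by (rule nn_integral_P1_stream[OF k n]) measurable
    finally show ?thesis
      using True AB by (simp add: law_def llr_def)
  next
    case False
    have "(\<integral>\<^sup>+x. ennreal (exp (- lam k n x)) * indicator S x \<partial>P1 k)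
        = (\<integral>\<^sup>+x. ennreal (exp (lam k n x)) * (ennreal (exp (- lam k n x)) * indicator S x) \<partial>P0 k)"
      by (rule nn_integral_P1_stream[OF k n]) measurable
    also have "\<dots> = (\<integral>\<^sup>+x. indicator S x \<partial>P0 k)"
      by (intro nn_integral_cong) (simp add: mult.assoc[symmetric] ennreal_mult[symmetric] exp_minus_inverse)
    also have "\<dots> = emeasure (P0 k) S"
      using S_path P0[OF k] by simp
    finally show ?thesis
      using False AB by (simp add: law_def llr_def)
  qed
qed

lemma emeasure_PA_local:
  assumes k: "k \<in> {1..K}" and n: "n \<ge> 1" and AB: "k \<in> A \<longleftrightarrow> k \<notin> B"
    and E: "E \<in> sets (local_filt K M k n)"
  shows "emeasure (PA A) E = (\<integral>\<^sup>+\<omega>. ennreal (exp (llr A k n (\<omega> k))) * indicator E \<omega> \<partial>PA B)"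
proof -
  have comp: "(\<lambda>\<omega>. \<omega> k) \<in> measurable (local_filt K M k n) (stream_filt (M k) n)"
    by (rule measurable_component_local[OF k order_refl])
  obtain S where S: "S \<in> sets (stream_filt (M k) n)" and ES: "E = (\<lambda>\<omega>. \<omega> k) -` S \<inter> \<Omega>"
  proof -
    from E obtain S0 where "S0 \<in> sets (PiM {1..n} (\<lambda>_. M k))"
      and "E = (\<lambda>\<omega>. restrict (\<omega> k) {1..n}) -` S0 \<inter> \<Omega>"
      using measurable_space[OF measurable_restrict_local[where M=M, OF k order_refl]]
      by (auto simp: local_filt_def sets_vimage_algebra2 space_local_filt)
    then show ?thesis
      using component_in_path_space[of _ K M, OF _ k]
      by (intro that[of "(\<lambda>x. restrict x {1..n}) -` S0 \<inter> space (path_space (M k))"])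
         (auto simp: stream_filt_def intro: in_vimage_algebra)
  qed
  have S_law: "S \<in> sets (law C k)" for C
    using S subalgebra_stream_filt[OF sets_law[OF k], of C n] by (auto simp: subalgebra_def)
  have [measurable]: "lam k n \<in> borel_measurable (law B k)"
    by (rule measurable_from_subalg[OF subalgebra_stream_filt[OF sets_law[OF k]] lam_meas[OF k n]])
  note S_law[of B, measurable]
  have "emeasure (PA A) E = emeasure (distr (PA A) (law A k) (\<lambda>\<omega>. \<omega> k)) S"
    using S_law by (simp add: emeasure_distr[OF measurable_component_PA[OF k]] ES space_PA)
  also have "\<dots> = (\<integral>\<^sup>+x. ennreal (exp (llr A k n x)) * indicator S x \<partial>distr (PA B) (law B k) (\<lambda>\<omega>. \<omega> k))"
    by (simp add: distr_component_PA[OF k] emeasure_law_stream[OF k n AB S])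
  also have "\<dots> = (\<integral>\<^sup>+\<omega>. ennreal (exp (llr A k n (\<omega> k))) * indicator S (\<omega> k) \<partial>PA B)"
    using S_law by (intro nn_integral_distr[OF measurable_component_PA[OF k]]) (simp add: llr_def)
  also have "\<dots> = (\<integral>\<^sup>+\<omega>. ennreal (exp (llr A k n (\<omega> k))) * indicator E \<omega> \<partial>PA B)"
    by (intro nn_integral_cong) (auto simp: ES space_PA indicator_def)
  finally show ?thesis .
qed

lemma likelihood_ratio_process_local:
  assumes k: "k \<in> {1..K}" and AB: "k \<in> A \<longleftrightarrow> k \<notin> B"
  shows "likelihood_ratio_process (PA A) (PA B) (local_filt K M k) (\<lambda>n \<omega>. llr A k n (\<omega> k))"
proof (rule likelihood_ratio_process.intro)
  show "prob_space (PA A)" "prob_space (PA B)" "sets (PA B) = sets (PA A)"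
    by (simp_all add: prob_space_PA sets_PA)
  show "subalgebra (PA A) (local_filt K M k n)" for n
    by (rule subalgebra_local_filt_PA[OF k])
  show "(\<lambda>\<omega>. llr A k n (\<omega> k)) \<in> borel_measurable (local_filt K M k n)" if "n \<ge> 1" for n
    using measurable_llr_local[OF k that order_refl] .
  show "emeasure (PA A) E = (\<integral>\<^sup>+\<omega>. ennreal (exp (llr A k n (\<omega> k))) * indicator E \<omega> \<partial>PA B)"
    if "n \<ge> 1" "E \<in> sets (local_filt K M k n)" for n E
    by (rule emeasure_PA_local[OF k that(1) AB that(2)])
qed

end

section \<open>The parallel SPRT and its truncation\<close>

lemma sprt_T_eq_enat_iff:
  "sprt_T lam a b k \<omega> = enat n \<longleftrightarrow>
     n \<ge> 1 \<and> lam k n (\<omega> k) \<notin> {-b<..<a} \<and> (\<forall>m\<in>{1..<n}. lam k m (\<omega> k) \<in> {-b<..<a})"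
proof -
  define P where "P n \<longleftrightarrow> n \<ge> 1 \<and> lam k n (\<omega> k) \<notin> {-b<..<a}" for n
  have T: "sprt_T lam a b k \<omega> = (if \<exists>n. P n then enat (LEAST n. P n) else \<infinity>)"
    by (simp add: sprt_T_def P_def)
  have P_ge_1: "P m \<Longrightarrow> m \<ge> 1" for m
    by (simp add: P_def)
  have "(LEAST n. P n) = n \<longleftrightarrow> P n \<and> (\<forall>m\<in>{1..<n}. \<not> P m)" if "P n"
    using that P_ge_1 by (auto intro!: Least_equality dest: not_less_Least)
  moreover have "(LEAST n. P n) = n \<Longrightarrow> P n" if "\<exists>n. P n"
    using LeastI_ex[OF that] by simp
  moreover have "(n \<ge> 1 \<and> lam k n (\<omega> k) \<notin> {-b<..<a} \<and> (\<forall>m\<in>{1..<n}. lam k m (\<omega> k) \<in> {-b<..<a}))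
      \<longleftrightarrow> P n \<and> (\<forall>m\<in>{1..<n}. \<not> P m)"
    by (auto simp: P_def)
  ultimately show ?thesis
    unfolding T by (cases "\<exists>n. P n") auto
qed

lemma sprt_T_eq_infinity_iff: "sprt_T lam a b k \<omega> = \<infinity> \<longleftrightarrow> (\<forall>n\<ge>1. lam k n (\<omega> k) \<in> {-b<..<a})"
  unfolding sprt_T_def by (cases "\<exists>n\<ge>1. lam k n (\<omega> k) \<notin> {-b<..<a}") auto

lemma sprt_T_neq_0: "sprt_T lam a b k \<omega> \<noteq> 0"
  using sprt_T_eq_enat_iff[of lam a b k \<omega> 0] by (auto simp: zero_enat_def)

lemma sprt_T_le_enat:
  assumes "n \<ge> 1" "lam k n (\<omega> k) \<notin> {-b<..<a}"
  shows "sprt_T lam a b k \<omega> \<le> enat n"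
proof -
  have "(LEAST n. n \<ge> 1 \<and> lam k n (\<omega> k) \<notin> {-b<..<a}) \<le> n"
    by (rule Least_le) (use assms in blast)
  then show ?thesis
    using assms unfolding sprt_T_def by (subst if_P) auto
qed

lemma sprt_D_iff: "sprt_D lam a b k \<omega> \<longleftrightarrow> (\<exists>n. sprt_T lam a b k \<omega> = enat n \<and> a \<le> lam k n (\<omega> k))"
  by (cases "sprt_T lam a b k \<omega>") (auto simp: sprt_D_def)

lemma sprt_T_enat_ge_1: "sprt_T lam a b k \<omega> = enat n \<Longrightarrow> n \<ge> 1"
  by (simp add: sprt_T_eq_enat_iff)

context llr_streams
begin

lemma pred_sprt_T_local:
  assumes k: "k \<in> {1..K}" and n: "1 \<le> n" "n \<le> t"
  shows "Measurable.pred (local_filt K M k t) (\<lambda>\<omega>. sprt_T lam a b k \<omega> = enat n)"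
proof -
  have lam_pred: "Measurable.pred (local_filt K M k t) (\<lambda>\<omega>. lam k m (\<omega> k) \<in> {-b<..<a})"
    if "1 \<le> m" "m \<le> t" for m
    using measurable_lam_local[OF k that] by measurable
  have "Measurable.pred (local_filt K M k t)
      (\<lambda>\<omega>. \<not> lam k n (\<omega> k) \<in> {-b<..<a} \<and> (\<forall>m\<in>{1..<n}. lam k m (\<omega> k) \<in> {-b<..<a}))"
    using n by (intro pred_intros_logic pred_intros_finite lam_pred) auto
  then show ?thesis
    using n by (simp only: sprt_T_eq_enat_iff) simp
qed

lemma pred_sprt_decision_local:
  assumes k: "k \<in> {1..K}" and n: "1 \<le> n" "n \<le> t"
  shows "Measurable.pred (local_filt K M k t) (\<lambda>\<omega>. sprt_T lam a b k \<omega> = enat n \<and> sprt_D lam a b k \<omega> = d)"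
proof -
  note pred_sprt_T_local[OF assms, measurable] measurable_lam_local[OF assms, measurable]
  have "Measurable.pred (local_filt K M k t) (\<lambda>\<omega>. sprt_T lam a b k \<omega> = enat n \<and> (a \<le> lam k n (\<omega> k)) = d)"
    by measurable
  then show ?thesis
    by (rule back_subst[of "Measurable.pred _"]) (auto simp: sprt_D_iff fun_eq_iff)
qed

lemma measurable_sprt_T: "k \<in> {1..K} \<Longrightarrow> sprt_T lam a b k \<in> measurable (PA A) (count_space UNIV)"
proof (rule measurable_count_space_eq2_countable[THEN iffD2], intro conjI ballI)
  fix e assume k: "k \<in> {1..K}"
  note measurable_lam_PA[OF k, measurable]
  have "Measurable.pred (PA A) (\<lambda>\<omega>. sprt_T lam a b k \<omega> = e)"
  proof (cases e)
    case (enat n)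
    show ?thesis
    proof (cases "n = 0")
      case True
      then show ?thesis
        using enat by (simp add: zero_enat_def[symmetric] sprt_T_neq_0 measurable_const)
    next
      case False
      then show ?thesis
        using pred_local_PA[OF k pred_sprt_T_local[OF k, of n n]] enat by simp
    qed
  next
    case infinity
    have "Measurable.pred (PA A) (\<lambda>\<omega>. \<forall>n\<ge>1. lam k n (\<omega> k) \<in> {-b<..<a})"
      by measurable
    then show ?thesis
      using infinity by (simp add: sprt_T_eq_infinity_iff)
  qed
  then show "sprt_T lam a b k -` {e} \<inter> space (PA A) \<in> sets (PA A)"
    by (simp add: pred_def vimage_def Int_def conj_commute)
qed simp

lemma pred_sprt_T:
  assumes "k \<in> {1..K}"
  shows "Measurable.pred (PA A) (\<lambda>\<omega>. P (sprt_T lam a b k \<omega>))"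
  by (rule measurable_compose[OF measurable_sprt_T[OF assms]]) simp

lemma pred_sprt_D:
  assumes k: "k \<in> {1..K}"
  shows "Measurable.pred (PA A) (sprt_D lam a b k)"
proof -
  have "Measurable.pred (PA A) (\<lambda>\<omega>. sprt_T lam a b k \<omega> = enat n \<and> sprt_D lam a b k \<omega>)" if "n \<ge> 1" for n
    using pred_local_PA[OF k pred_sprt_decision_local[OF k that order_refl, of a b True]] by simp
  then have "Measurable.pred (PA A) (\<lambda>\<omega>. \<exists>n\<in>{1..}. sprt_T lam a b k \<omega> = enat n \<and> sprt_D lam a b k \<omega>)"
    by (intro pred_intros_countable_bounded) auto
  moreover have "sprt_D lam a b k \<omega> \<longleftrightarrow> (\<exists>n\<in>{1..}. sprt_T lam a b k \<omega> = enat n \<and> sprt_D lam a b k \<omega>)" for \<omega>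
    by (auto simp: sprt_D_iff sprt_T_eq_enat_iff)
  ultimately show ?thesis
    by simp
qed

text \<open>The measurability properties of a decision rule used by the lower bound.  Stopping times
  may be infinite, so both the SPRT and every decentralized procedure qualify.\<close>
definition stream_adapted :: "(nat \<Rightarrow> (nat \<Rightarrow> nat \<Rightarrow> 'a) \<Rightarrow> enat) \<Rightarrow> (nat \<Rightarrow> (nat \<Rightarrow> nat \<Rightarrow> 'a) \<Rightarrow> bool) \<Rightarrow> bool" where
  "stream_adapted T D \<longleftrightarrow> (\<forall>k\<in>{1..K}. (\<forall>\<omega>\<in>\<Omega>. T k \<omega> \<noteq> 0) \<and> Measurable.pred (joint_space K M) (D k) \<and>
     (\<forall>n\<ge>1. \<forall>d. Measurable.pred (local_filt K M k n) (\<lambda>\<omega>. T k \<omega> = enat n \<and> D k \<omega> = d)))"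

lemma stream_adapted_sprt: "stream_adapted (sprt_T lam a b) (sprt_D lam a b)"
  using sprt_T_neq_0[of lam a b] pred_sprt_D[where A="{}"] pred_sprt_decision_local
  by (auto simp: stream_adapted_def pred_PA_iff)

lemma stream_adapted_decentralized:
  assumes "is_decentralized K M T D"
  shows "stream_adapted (\<lambda>k \<omega>. enat (T k \<omega>)) D"
  unfolding stream_adapted_def
proof (intro ballI conjI allI impI)
  fix k assume k: "k \<in> {1..K}"
  interpret filtration \<Omega> "local_filt K M k"
    by (rule filtration_local_filt[OF k])
  have T: "stopping_time (local_filt K M k) (T k)" and D: "Measurable.pred (pre_sigma (T k)) (D k)"
    and T_pos: "\<And>\<omega>. \<omega> \<in> \<Omega> \<Longrightarrow> 1 \<le> T k \<omega>"
    using assms k by (auto simp: is_decentralized_def is_procedure_def)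
  then have notD: "Measurable.pred (pre_sigma (T k)) (\<lambda>\<omega>. \<not> D k \<omega>)"
    by measurable
  show "enat (T k \<omega>) \<noteq> 0" if "\<omega> \<in> \<Omega>" for \<omega>
    using T_pos[OF that] by (simp add: zero_enat_def)
  show stopped: "Measurable.pred (local_filt K M k n) (\<lambda>\<omega>. enat (T k \<omega>) = enat n \<and> D k \<omega> = d)" for n d
    using pred_stopped_at[OF T D, of n] pred_stopped_at[OF T notD, of n] by (cases d) simp_all
  have "Measurable.pred (joint_space K M) (\<lambda>\<omega>. \<exists>n. enat (T k \<omega>) = enat n \<and> D k \<omega> = True)"
  proof (intro pred_intros_countable)
    show "Measurable.pred (joint_space K M) (\<lambda>\<omega>. enat (T k \<omega>) = enat n \<and> D k \<omega> = True)" for n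
      using pred_local_PA[OF k stopped[of n True], where A="{}"] by (simp only: pred_PA_iff)
  qed
  then show "Measurable.pred (joint_space K M) (D k)"
    by simp
qed

lemma measure_wrong_decision_le_FWE:
  assumes A: "A \<subseteq> {1..K}" and k: "k \<in> {1..K}"
    and D: "\<And>j. j \<in> {1..K} \<Longrightarrow> Measurable.pred (joint_space K M) (D j)"
  shows "measure (PA A) {\<omega>\<in>\<Omega>. D k \<omega> \<noteq> (k \<in> A)}
    \<le> (if k \<in> A then FWE2 K P0 P1 D A else FWE1 K P0 P1 D A)"
proof -
  interpret prob_space "PA A"
    by (rule prob_space_PA)
  have D_PA: "Measurable.pred (PA A) (D j)" if "j \<in> {1..K}" for j
    using D[OF that] by (simp add: pred_PA_iff)
  have "finite A"
    using A finite_subset by blast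
  then have "Measurable.pred (PA A) (\<lambda>\<omega>. \<exists>i\<in>A. \<not> D i \<omega>)"
      "Measurable.pred (PA A) (\<lambda>\<omega>. \<exists>j\<in>{1..K} - A. D j \<omega>)"
    using A by (intro pred_intros_finite pred_intros_logic D_PA; auto)+
  then have events: "{\<omega>\<in>\<Omega>. \<exists>i\<in>A. \<not> D i \<omega>} \<in> events" "{\<omega>\<in>\<Omega>. \<exists>j\<in>{1..K} - A. D j \<omega>} \<in> events"
    by (simp_all add: pred_def space_PA)
  show ?thesis
  proof (cases "k \<in> A")
    case True
    then have "{\<omega>\<in>\<Omega>. D k \<omega> \<noteq> (k \<in> A)} \<subseteq> {\<omega>\<in>\<Omega>. \<exists>i\<in>A. \<not> D i \<omega>}"
      by auto
    from finite_measure_mono[OF this events(1)] show ?thesis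
      using True by (simp add: FWE2_def space_PA)
  next
    case False
    then have "{\<omega>\<in>\<Omega>. D k \<omega> \<noteq> (k \<in> A)} \<subseteq> {\<omega>\<in>\<Omega>. \<exists>j\<in>{1..K} - A. D j \<omega>}"
      using k by auto
    from finite_measure_mono[OF this events(2)] show ?thesis
      using False by (simp add: FWE1_def space_PA)
  qed
qed

lemma error_ok_wrong_decision:
  assumes ok: "error_ok K P0 P1 D \<alpha> \<beta> Pis" and Pis: "Pis \<subseteq> Pow {1..K}" and A: "A \<in> Pis"
    and k: "k \<in> {1..K}" and D: "\<And>j. j \<in> {1..K} \<Longrightarrow> Measurable.pred (joint_space K M) (D j)"
  shows "measure (PA A) {\<omega>\<in>\<Omega>. D k \<omega> \<noteq> (k \<in> A)} \<le> (if k \<in> A then \<beta> else \<alpha>)"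
proof -
  have "A \<subseteq> {1..K}"
    using Pis A by auto
  from measure_wrong_decision_le_FWE[of A k D, OF this k D] ok A show ?thesis
    unfolding error_ok_def by (cases "k \<in> A") (auto intro: order_trans)
qed

definition trunc_T :: "real \<Rightarrow> real \<Rightarrow> nat \<Rightarrow> nat \<Rightarrow> (nat \<Rightarrow> nat \<Rightarrow> 'a) \<Rightarrow> nat" where
  "trunc_T a b N k \<omega> = (case sprt_T lam a b k \<omega> of enat n \<Rightarrow> min n N | \<infinity> \<Rightarrow> N)"

definition trunc_D :: "real \<Rightarrow> real \<Rightarrow> nat \<Rightarrow> nat \<Rightarrow> (nat \<Rightarrow> nat \<Rightarrow> 'a) \<Rightarrow> bool" where
  "trunc_D a b N k \<omega> \<longleftrightarrow> sprt_D lam a b k \<omega> \<and> sprt_T lam a b k \<omega> \<le> enat N"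

lemma trunc_T_le_iff:
  assumes "N \<ge> 1"
  shows "trunc_T a b N k \<omega> \<le> t \<longleftrightarrow> N \<le> t \<or> (\<exists>n\<in>{1..t}. sprt_T lam a b k \<omega> = enat n)"
proof (cases "sprt_T lam a b k \<omega>")
  case (enat m)
  then show ?thesis
    using sprt_T_enat_ge_1[OF enat] by (auto simp: trunc_T_def)
qed (use assms in \<open>auto simp: trunc_T_def\<close>)

lemma trunc_D_and_T_le_iff:
  "trunc_D a b N k \<omega> \<and> trunc_T a b N k \<omega> \<le> t \<longleftrightarrow>
     (\<exists>n\<in>{1..min t N}. sprt_T lam a b k \<omega> = enat n \<and> sprt_D lam a b k \<omega>)"
proof (cases "sprt_T lam a b k \<omega>")
  case (enat m)
  then show ?thesis
    using sprt_T_enat_ge_1[OF enat] by (auto simp: trunc_T_def trunc_D_def)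
qed (auto simp: trunc_T_def trunc_D_def)

lemma is_decentralized_trunc:
  assumes N: "N \<ge> 1"
  shows "is_decentralized K M (trunc_T a b N) (trunc_D a b N)"
  unfolding is_decentralized_def is_procedure_def
proof (intro conjI ballI)
  fix k assume k: "k \<in> {1..K}"
  have T_local: "Measurable.pred (local_filt K M k t) (\<lambda>\<omega>. trunc_T a b N k \<omega> \<le> t)" for t
    using pred_sprt_T_local[OF k] unfolding trunc_T_le_iff[OF N]
    by (intro pred_intros_logic pred_intros_finite) auto
  have D_local: "Measurable.pred (local_filt K M k t) (\<lambda>\<omega>. trunc_D a b N k \<omega> \<and> trunc_T a b N k \<omega> \<le> t)" for t
    using pred_sprt_decision_local[OF k, where d=True] unfolding trunc_D_and_T_le_iff
    by (intro pred_intros_finite) auto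
  show "1 \<le> trunc_T a b N k \<omega>" for \<omega>
    using trunc_T_le_iff[OF N, of a b k \<omega> 0] N by simp
  show T_stop: "stopping_time (local_filt K M k) (trunc_T a b N k)"
    using T_local by (rule stopping_timeI)
  show T_stop': "stopping_time (global_filt K M) (trunc_T a b N k)"
    using pred_local_global[OF k T_local] by (rule stopping_timeI)
  show "Measurable.pred (filtration.pre_sigma \<Omega> (local_filt K M k) (trunc_T a b N k)) (trunc_D a b N k)"
    using D_local by (intro filtration.pred_pre_sigmaI[OF filtration_local_filt[OF k] T_stop])
  show "Measurable.pred (filtration.pre_sigma \<Omega> (global_filt K M) (trunc_T a b N k)) (trunc_D a b N k)"
    using pred_local_global[OF k D_local]
    by (intro filtration.pred_pre_sigmaI[OF filtration_global_filt T_stop'])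
qed

lemma error_ok_trunc:
  assumes Pis: "Pis \<subseteq> Pow {1..K}"
    and ok: "error_ok K P0 P1 (sprt_D lam a b) \<alpha> (\<beta>/2) Pis"
    and tail: "\<And>A. A \<in> Pis \<Longrightarrow> measure (PA A) {\<omega>\<in>\<Omega>. \<exists>k\<in>{1..K}. enat N < sprt_T lam a b k \<omega>} \<le> \<beta>/2"
  shows "error_ok K P0 P1 (trunc_D a b N) \<alpha> \<beta> Pis"
  unfolding error_ok_def
proof (intro ballI conjI)
  fix A assume A: "A \<in> Pis"
  interpret prob_space "PA A"
    by (rule prob_space_PA)
  have "A \<subseteq> {1..K}"
    using A Pis by auto
  then have "finite A"
    by (rule finite_subset) simp
  then have "Measurable.pred (PA A) (\<lambda>\<omega>. \<exists>j\<in>{1..K} - A. sprt_D lam a b j \<omega>)"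
      "Measurable.pred (PA A) (\<lambda>\<omega>. \<exists>i\<in>A. \<not> sprt_D lam a b i \<omega>)"
      "Measurable.pred (PA A) (\<lambda>\<omega>. \<exists>k\<in>{1..K}. enat N < sprt_T lam a b k \<omega>)"
    using \<open>A \<subseteq> {1..K}\<close>
    by (intro pred_intros_finite pred_intros_logic pred_sprt_D pred_sprt_T; force)+
  then have events: "{\<omega>\<in>\<Omega>. \<exists>j\<in>{1..K} - A. sprt_D lam a b j \<omega>} \<in> events"
      "{\<omega>\<in>\<Omega>. \<exists>i\<in>A. \<not> sprt_D lam a b i \<omega>} \<in> events"
      "{\<omega>\<in>\<Omega>. \<exists>k\<in>{1..K}. enat N < sprt_T lam a b k \<omega>} \<in> events"
    by (simp_all add: pred_def space_PA)
  have "FWE1 K P0 P1 (trunc_D a b N) A \<le> FWE1 K P0 P1 (sprt_D lam a b) A"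
    unfolding FWE1_def space_PA by (rule finite_measure_mono[OF _ events(1)]) (auto simp: trunc_D_def)
  also have "\<dots> \<le> \<alpha>"
    using ok A by (simp add: error_ok_def)
  finally show "FWE1 K P0 P1 (trunc_D a b N) A \<le> \<alpha>" .
  have "FWE2 K P0 P1 (trunc_D a b N) A
      \<le> measure (PA A) ({\<omega>\<in>\<Omega>. \<exists>i\<in>A. \<not> sprt_D lam a b i \<omega>}
                       \<union> {\<omega>\<in>\<Omega>. \<exists>k\<in>{1..K}. enat N < sprt_T lam a b k \<omega>})"
    unfolding FWE2_def space_PA using \<open>A \<subseteq> {1..K}\<close> events
    by (intro finite_measure_mono) (auto simp: trunc_D_def space_PA not_le)
  also have "\<dots> \<le> FWE2 K P0 P1 (sprt_D lam a b) A + \<beta>/2"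
    unfolding FWE2_def space_PA using events tail[OF A] by (intro measure_Un_le[THEN order_trans]) auto
  also have "\<dots> \<le> \<beta>"
    using ok A unfolding error_ok_def by fastforce
  finally show "FWE2 K P0 P1 (trunc_D a b N) A \<le> \<beta>" .
qed

lemma L_dec_le_E_sprt_T:
  assumes N: "N \<ge> 1" and ok: "error_ok K P0 P1 (trunc_D a b N) \<alpha> \<beta> Pis"
  shows "L_dec K M P0 P1 k A \<alpha> \<beta> Pis \<le> E_sprt_T K P0 P1 lam a b k A"
proof -
  have "(trunc_T a b N, trunc_D a b N) \<in> {(T, D). is_decentralized K M T D \<and> error_ok K P0 P1 D \<alpha> \<beta> Pis}"
    using is_decentralized_trunc[OF N] ok by simp
  then have "L_dec K M P0 P1 k A \<alpha> \<beta> Pis \<le> (\<integral>\<^sup>+\<omega>. ennreal (real (trunc_T a b N k \<omega>)) \<partial>PA A)"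
    unfolding L_dec_def by (rule INF_lower2) simp
  also have "\<dots> \<le> (\<integral>\<^sup>+\<omega>. ennreal_of_enat (sprt_T lam a b k \<omega>) \<partial>PA A)"
    by (intro nn_integral_mono)
       (auto simp: trunc_T_def ennreal_of_nat_eq_real_of_nat[symmetric] of_nat_eq_enat split: enat.split)
  finally show ?thesis
    unfolding E_sprt_T_def .
qed

end

section \<open>Rates of the log-likelihood ratios\<close>

locale llr_rates = llr_streams K M P0 P1 lam for K M P0 P1 lam +
  fixes I J :: "nat \<Rightarrow> real"
  assumes IJ_pos: "\<And>k. k \<in> {1..K} \<Longrightarrow> I k > 0 \<and> J k > 0"
    and limsup1: "\<And>k. k \<in> {1..K} \<Longrightarrow>
        AE x in P1 k. limsup (\<lambda>n. ereal (lam k n x / real n)) \<le> ereal (I k)"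
    and limsup0: "\<And>k. k \<in> {1..K} \<Longrightarrow>
        AE x in P0 k. limsup (\<lambda>n. ereal (- lam k n x / real n)) \<le> ereal (J k)"
    and compl1: "\<And>k \<epsilon>. k \<in> {1..K} \<Longrightarrow> \<epsilon> > 0 \<Longrightarrow>
        summable (\<lambda>n. measure (P1 k) {x \<in> space (P1 k). lam k n x / real n \<le> I k - \<epsilon>})"
    and compl0: "\<And>k \<epsilon>. k \<in> {1..K} \<Longrightarrow> \<epsilon> > 0 \<Longrightarrow>
        summable (\<lambda>n. measure (P0 k) {x \<in> space (P0 k). - lam k n x / real n \<le> J k - \<epsilon>})"
begin

definition rate :: "nat set \<Rightarrow> nat \<Rightarrow> real" where
  "rate A k = (if k \<in> A then I k else J k)"

lemma rate_pos: "k \<in> {1..K} \<Longrightarrow> rate A k > 0"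
  using IJ_pos by (simp add: rate_def)

lemma AE_limsup_llr:
  assumes k: "k \<in> {1..K}"
  shows "AE \<omega> in PA A. limsup (\<lambda>n. ereal (llr A k n (\<omega> k) / real n)) \<le> ereal (rate A k)"
proof (rule AE_component_PA[OF k])
  show "AE x in law A k. limsup (\<lambda>n. ereal (llr A k n x / real n)) \<le> ereal (rate A k)"
  proof (cases "k \<in> A")
    case True
    then show ?thesis
      using limsup1[OF k] unfolding law_def if_P[OF True] by (simp add: llr_def rate_def)
  next
    case False
    then show ?thesis
      using limsup0[OF k] unfolding law_def if_not_P[OF False] by (simp add: llr_def rate_def)
  qed
qed

lemma summable_llr_deviation:
  assumes k: "k \<in> {1..K}" and \<epsilon>: "\<epsilon> > 0"
  shows "summable (\<lambda>n. measure (PA A) {\<omega>\<in>\<Omega>. llr A k n (\<omega> k) / real n \<le> rate A k - \<epsilon>})"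
proof -
  have "summable (\<lambda>n. measure (law A k) {x\<in>space (law A k). llr A k n x / real n \<le> rate A k - \<epsilon>})"
    using compl1[OF k \<epsilon>] compl0[OF k \<epsilon>] by (simp add: law_def llr_def rate_def)
  then have "summable (\<lambda>n. measure (law A k) {x\<in>space (law A k). llr A k (Suc n) x / real (Suc n) \<le> rate A k - \<epsilon>})"
    by (subst summable_Suc_iff)
  moreover have "measure (PA A) {\<omega>\<in>\<Omega>. llr A k n (\<omega> k) / real n \<le> rate A k - \<epsilon>}
      = measure (law A k) {x\<in>space (law A k). llr A k n x / real n \<le> rate A k - \<epsilon>}" if "n \<ge> 1" for n
  proof -
    have [measurable]: "llr A k n \<in> borel_measurable (path_space (M k))"
      using measurable_from_subalg[OF subalgebra_stream_filt[OF refl] lam_meas[OF k that]]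
      by (simp add: llr_def[abs_def])
    have S: "{x\<in>space (path_space (M k)). llr A k n x / real n \<le> rate A k - \<epsilon>} \<in> sets (path_space (M k))"
      by measurable
    have eq: "{\<omega>\<in>\<Omega>. \<omega> k \<in> {x\<in>space (path_space (M k)). llr A k n x / real n \<le> rate A k - \<epsilon>}}
        = {\<omega>\<in>\<Omega>. llr A k n (\<omega> k) / real n \<le> rate A k - \<epsilon>}"
      using component_in_path_space[of _ K M, OF _ k] by auto
    show ?thesis
      using measure_component_PA[OF k S, of A] unfolding eq by (simp add: sets_eq_imp_space_eq[OF sets_law[OF k]])
  qed
  ultimately show ?thesis
    by (subst summable_Suc_iff[symmetric]) (simp del: of_nat_Suc)
qed

lemma E_sprt_T_le:
  assumes k: "k \<in> {1..K}" and \<epsilon>: "0 < \<epsilon>" "\<epsilon> < rate A k" and ab: "a > 0" "b > 0"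
  shows "E_sprt_T K P0 P1 lam a b k A \<le> ennreal ((if k \<in> A then a else b) / (rate A k - \<epsilon>) + 2 +
    (\<Sum>n. measure (PA A) {\<omega>\<in>\<Omega>. llr A k n (\<omega> k) / real n \<le> rate A k - \<epsilon>}))"
  unfolding E_sprt_T_def space_PA[of A, symmetric]
proof (rule prob_space.expected_hitting_time_le[OF prob_space_PA measurable_sprt_T[OF k] _ _ \<epsilon>])
  show "(\<lambda>\<omega>. llr A k n (\<omega> k)) \<in> borel_measurable (PA A)" if "n \<ge> 1" for n
    by (rule measurable_llr_PA[OF k that])
  show "summable (\<lambda>n. measure (PA A) {\<omega>\<in>space (PA A). llr A k n (\<omega> k) / real n \<le> rate A k - \<epsilon>})"
    using summable_llr_deviation[OF k \<epsilon>(1)] by (simp add: space_PA)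
  show "(if k \<in> A then a else b) > 0"
    using ab by simp
  show "sprt_T lam a b k \<omega> \<le> enat n"
    if "n \<ge> 1" "(if k \<in> A then a else b) \<le> llr A k n (\<omega> k)" for \<omega> n
    using that ab by (intro sprt_T_le_enat) (auto simp: llr_def split: if_splits)
qed

lemma AE_sprt_T_finite:
  assumes k: "k \<in> {1..K}" and ab: "a > 0" "b > 0"
  shows "AE \<omega> in PA A. sprt_T lam a b k \<omega> \<noteq> \<infinity>"
proof -
  have "E_sprt_T K P0 P1 lam a b k A \<noteq> \<infinity>"
    using E_sprt_T_le[OF k _ _ ab, where A=A and \<epsilon>="rate A k / 2"] rate_pos[OF k, of A]
    by (auto simp: top_unique)
  then have "AE \<omega> in PA A. ennreal_of_enat (sprt_T lam a b k \<omega>) \<noteq> \<infinity>"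
    unfolding E_sprt_T_def
    by (intro nn_integral_PInf_AE measurable_compose[OF measurable_sprt_T[OF k]]) simp_all
  then show ?thesis
    by eventually_elim (metis ennreal_of_enat_infty infinity_ennreal_def)
qed

lemma tail_sprt_T_tendsto_0:
  assumes ab: "a > 0" "b > 0"
  shows "(\<lambda>N. measure (PA A) {\<omega>\<in>\<Omega>. \<exists>k\<in>{1..K}. enat N < sprt_T lam a b k \<omega>}) \<longlonglongrightarrow> 0"
proof (rule prob_space.prob_tendsto_0_if_AE_eventually_notin[OF prob_space_PA])
  show "{\<omega>\<in>\<Omega>. \<exists>k\<in>{1..K}. enat N < sprt_T lam a b k \<omega>} \<in> sets (PA A)" for N
  proof -
    have "Measurable.pred (PA A) (\<lambda>\<omega>. \<exists>k\<in>{1..K}. enat N < sprt_T lam a b k \<omega>)"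
      by (intro pred_intros_finite pred_sprt_T) auto
    then show ?thesis
      by (simp add: pred_def space_PA)
  qed
  have "AE \<omega> in PA A. \<forall>k\<in>{1..K}. sprt_T lam a b k \<omega> \<noteq> \<infinity>"
    using AE_sprt_T_finite[OF _ ab] by (intro AE_finite_allI) auto
  then show "AE \<omega> in PA A. eventually (\<lambda>N. \<omega> \<notin> {\<omega>\<in>\<Omega>. \<exists>k\<in>{1..K}. enat N < sprt_T lam a b k \<omega>}) sequentially"
  proof eventually_elim
    case (elim \<omega>)
    have "eventually (\<lambda>N. \<not> enat N < sprt_T lam a b k \<omega>) sequentially" if k: "k \<in> {1..K}" for k
    proof -
      obtain m where "sprt_T lam a b k \<omega> = enat m"
        using bspec[OF elim k] by (cases "sprt_T lam a b k \<omega>") auto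
      then show ?thesis
        using eventually_ge_at_top[of m] by (simp add: not_less)
    qed
    then have "eventually (\<lambda>N. \<forall>k\<in>{1..K}. \<not> enat N < sprt_T lam a b k \<omega>) sequentially"
      by (intro eventually_ball_finite) auto
    then show ?case
      by (rule eventually_mono) auto
  qed
qed

lemma expected_time_lower_bound_adapted:
  assumes k: "k \<in> {1..K}" and AB: "k \<in> A \<longleftrightarrow> k \<notin> B" and \<delta>: "0 < \<delta>" "\<delta> < 1"
  obtains \<alpha>0 where "\<alpha>0 > 0"
    and "\<And>\<alpha> \<beta> T D. 0 < \<alpha> \<Longrightarrow> \<alpha> < \<alpha>0 \<Longrightarrow> \<beta> < \<alpha>0 \<Longrightarrow> stream_adapted T D \<Longrightarrow>
      measure (PA B) {\<omega>\<in>\<Omega>. D k \<omega> \<noteq> (k \<in> B)} \<le> \<alpha> \<Longrightarrow>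
      measure (PA A) {\<omega>\<in>\<Omega>. D k \<omega> \<noteq> (k \<in> A)} \<le> \<beta> \<Longrightarrow>
      ennreal ((1 - \<delta>) * \<bar>ln \<alpha>\<bar> / rate A k) \<le> (\<integral>\<^sup>+\<omega>. ennreal_of_enat (T k \<omega>) \<partial>PA A)"
proof -
  interpret likelihood_ratio_process "PA A" "PA B" "local_filt K M k" "\<lambda>n \<omega>. llr A k n (\<omega> k)"
    by (rule likelihood_ratio_process_local[OF k AB])
  obtain \<alpha>0 where \<alpha>0: "\<alpha>0 > 0" and bound: "\<And>\<alpha> \<beta> T D. 0 < \<alpha> \<Longrightarrow> \<alpha> < \<alpha>0 \<Longrightarrow> \<beta> < \<alpha>0 \<Longrightarrow>
      (\<And>\<omega>. \<omega> \<in> space (PA A) \<Longrightarrow> T \<omega> \<noteq> 0) \<Longrightarrow>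
      (\<And>n. n \<ge> 1 \<Longrightarrow> Measurable.pred (local_filt K M k n) (\<lambda>\<omega>. T \<omega> = enat n \<and> D \<omega>)) \<Longrightarrow>
      Measurable.pred (PA A) D \<Longrightarrow>
      measure (PA B) {\<omega>\<in>space (PA B). D \<omega>} \<le> \<alpha> \<Longrightarrow> measure (PA A) {\<omega>\<in>space (PA A). \<not> D \<omega>} \<le> \<beta> \<Longrightarrow>
      ennreal ((1 - \<delta>) * \<bar>ln \<alpha>\<bar> / rate A k) \<le> (\<integral>\<^sup>+\<omega>. ennreal_of_enat (T \<omega>) \<partial>PA A)"
    using expected_time_lower_bound[OF AE_limsup_llr[OF k] rate_pos[OF k] \<delta>] by blast
  show ?thesis
  proof (rule that[OF \<alpha>0])
    fix \<alpha> \<beta> T D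
    assume \<alpha>\<beta>: "0 < \<alpha>" "\<alpha> < \<alpha>0" "\<beta> < \<alpha>0" and adapted: "stream_adapted T D"
      and err: "measure (PA B) {\<omega>\<in>\<Omega>. D k \<omega> \<noteq> (k \<in> B)} \<le> \<alpha>" "measure (PA A) {\<omega>\<in>\<Omega>. D k \<omega> \<noteq> (k \<in> A)} \<le> \<beta>"
    have D_PA: "Measurable.pred (PA A) (D k)"
      using adapted k by (simp add: stream_adapted_def pred_PA_iff)
    show "ennreal ((1 - \<delta>) * \<bar>ln \<alpha>\<bar> / rate A k) \<le> (\<integral>\<^sup>+\<omega>. ennreal_of_enat (T k \<omega>) \<partial>PA A)"
    proof (rule bound[of \<alpha> \<beta> "T k" "\<lambda>\<omega>. D k \<omega> = (k \<in> A)", OF \<alpha>\<beta>])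
      show "Measurable.pred (PA A) (\<lambda>\<omega>. D k \<omega> = (k \<in> A))"
        using D_PA by measurable
    qed (use adapted k err AB in \<open>auto simp: stream_adapted_def space_PA\<close>)
  qed
qed

end

section \<open>Asymptotic optimality\<close>

lemma eventually_ab_to_0_unit_square: "eventually (\<lambda>x. fst x \<in> {0<..<1} \<and> snd x \<in> {0<..<1}) ab_to_0"
  unfolding ab_to_0_def eventually_at_filter by (intro always_eventually) (auto simp: mem_Times_iff)

lemma filterlim_fst_ab_to_0: "filterlim fst (at_right 0) ab_to_0"
proof (rule tendsto_imp_filterlim_at_right)
  show "(fst \<longlongrightarrow> 0) ab_to_0"
    unfolding ab_to_0_def using tendsto_fst[OF tendsto_ident_at, of "(0::real, 0::real)"] by simp
  show "eventually (\<lambda>x. fst x > 0) ab_to_0"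
    using eventually_ab_to_0_unit_square by eventually_elim auto
qed

lemma filterlim_snd_ab_to_0: "filterlim snd (at_right 0) ab_to_0"
proof (rule tendsto_imp_filterlim_at_right)
  show "(snd \<longlongrightarrow> 0) ab_to_0"
    unfolding ab_to_0_def using tendsto_snd[OF tendsto_ident_at, of "(0::real, 0::real)"] by simp
  show "eventually (\<lambda>x. snd x > 0) ab_to_0"
    using eventually_ab_to_0_unit_square by eventually_elim auto
qed

lemma filterlim_halve_snd_ab_to_0: "filterlim (\<lambda>x. (fst x, snd x / 2)) ab_to_0 ab_to_0"
proof -
  have "((\<lambda>x. (fst x, snd x / 2)) \<longlongrightarrow> (0, 0)) ab_to_0"
    using filterlim_fst_ab_to_0 filterlim_snd_ab_to_0
    by (intro tendsto_Pair) (auto dest: filterlim_at_right_to_0[THEN iffD1] intro: tendsto_divide_zero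
      simp: filterlim_at)
  moreover have "eventually (\<lambda>x. (fst x, snd x / 2) \<in> {0<..<1} \<times> {0<..<1} - {(0, 0)}) ab_to_0"
    using eventually_ab_to_0_unit_square by eventually_elim auto
  ultimately show ?thesis
    unfolding ab_to_0_def[of] by (rule filterlim_at_withinI)
qed

text \<open>The error level whose logarithm governs the sampling time of stream k under P_A.\<close>
definition err_level :: "nat set \<Rightarrow> nat \<Rightarrow> real \<times> real \<Rightarrow> real" where
  "err_level A k x = (if k \<in> A then fst x else snd x)"

lemma filterlim_err_level: "filterlim (err_level A k) (at_right 0) ab_to_0"
  using filterlim_fst_ab_to_0 filterlim_snd_ab_to_0
  by (cases "k \<in> A") (simp_all add: err_level_def[abs_def])

lemma filterlim_abs_ln_err_level: "filterlim (\<lambda>x. \<bar>ln (err_level A k x)\<bar>) at_top ab_to_0"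
proof -
  have "filterlim (\<lambda>t::real. \<bar>ln t\<bar>) at_top (at_right 0)"
    by real_asymp
  then show ?thesis
    using filterlim_err_level by (rule filterlim_compose)
qed

lemma eventually_abs_ln_err_level_pos: "eventually (\<lambda>x. \<bar>ln (err_level A k x)\<bar> > 0) ab_to_0"
  using eventually_ab_to_0_unit_square by eventually_elim (auto simp: err_level_def)

context llr_rates
begin

lemma eventually_E_sprt_T_le:
  assumes k: "k \<in> {1..K}" and \<delta>: "0 < \<delta>" "\<delta> < 1"
    and pos: "eventually (\<lambda>x. a' x > 0 \<and> b' x > 0) ab_to_0"
    and thr: "(\<lambda>x. if k \<in> A then a' x else b' x) \<sim>[ab_to_0] (\<lambda>x. \<bar>ln (err_level A k x)\<bar>)"
  shows "eventually (\<lambda>x. E_sprt_T K P0 P1 lam (a' x) (b' x) k A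
    \<le> ennreal ((1 + \<delta>) * \<bar>ln (err_level A k x)\<bar> / rate A k)) ab_to_0"
proof -
  define R where "R = rate A k"
  have R: "R > 0"
    using rate_pos[OF k] by (simp add: R_def)
  define C where "C = (\<Sum>n. measure (PA A) {\<omega>\<in>\<Omega>. llr A k n (\<omega> k) / real n \<le> R - R * \<delta> / 8})"
  have thr_le: "eventually (\<lambda>x. (if k \<in> A then a' x else b' x) \<le> (1 + \<delta>/8) * \<bar>ln (err_level A k x)\<bar>) ab_to_0"
    using asymp_equiv_imp_eventually_le[OF thr, of "1 + \<delta>/8"] \<delta> by (auto elim!: eventually_mono)
  have big: "eventually (\<lambda>x. \<bar>ln (err_level A k x)\<bar> \<ge> 2 * R * (2 + \<bar>C\<bar>) / \<delta>) ab_to_0"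
    using filterlim_abs_ln_err_level by (simp add: filterlim_at_top)
  from pos thr_le big show ?thesis
  proof eventually_elim
    case (elim x)
    have "E_sprt_T K P0 P1 lam (a' x) (b' x) k A
        \<le> ennreal ((if k \<in> A then a' x else b' x) / (R - R * \<delta> / 8) + 2 + C)"
      using E_sprt_T_le[OF k _ _ conjunct1[OF elim(1)] conjunct2[OF elim(1)], of "R * \<delta> / 8"] R \<delta>
      by (simp add: R_def C_def)
    also have "\<dots> \<le> ennreal ((1 + \<delta>) * \<bar>ln (err_level A k x)\<bar> / R)"
      using upper_bound_arith[OF R \<delta> elim(2) elim(3)] by (intro ennreal_leI) simp
    finally show ?case
      by (simp add: R_def)
  qed
qed

end

locale sprt_design = llr_rates K M P0 P1 lam I J for K M P0 P1 lam I J +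
  fixes Pis :: "nat set set" and a b :: "real \<times> real \<Rightarrow> real"
  assumes Pi_sub: "Pis \<subseteq> Pow {1..K}"
    and Pi_rich: "\<And>k. k \<in> {1..K} \<Longrightarrow> \<exists>A\<in>Pis. \<exists>B\<in>Pis. k \<in> A \<and> k \<notin> B"
    and ab_pos: "\<And>\<alpha> \<beta>. \<alpha> \<in> {0<..<1} \<Longrightarrow> \<beta> \<in> {0<..<1} \<Longrightarrow> a (\<alpha>, \<beta>) > 0 \<and> b (\<alpha>, \<beta>) > 0"
    and sprt_ok: "\<And>\<alpha> \<beta>. \<alpha> \<in> {0<..<1} \<Longrightarrow> \<beta> \<in> {0<..<1} \<Longrightarrow>
        error_ok K P0 P1 (sprt_D lam (a (\<alpha>, \<beta>)) (b (\<alpha>, \<beta>))) \<alpha> \<beta> Pis"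
    and a_asymp: "a \<sim>[ab_to_0] (\<lambda>(\<alpha>, \<beta>). \<bar>ln \<alpha>\<bar>)"
    and b_asymp: "b \<sim>[ab_to_0] (\<lambda>(\<alpha>, \<beta>). \<bar>ln \<beta>\<bar>)"
begin

lemma eventually_ab_pos: "eventually (\<lambda>x. a x > 0 \<and> b x > 0) ab_to_0"
  using eventually_ab_to_0_unit_square by eventually_elim (use ab_pos in auto)

lemma eventually_ab_halve_pos: "eventually (\<lambda>x. a (fst x, snd x / 2) > 0 \<and> b (fst x, snd x / 2) > 0) ab_to_0"
  using filterlim_halve_snd_ab_to_0 eventually_ab_pos unfolding filterlim_iff by blast

lemma threshold_asymp:
  "(\<lambda>x. if k \<in> A then a x else b x) \<sim>[ab_to_0] (\<lambda>x. \<bar>ln (err_level A k x)\<bar>)"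
  using a_asymp b_asymp by (cases "k \<in> A") (simp_all add: err_level_def case_prod_unfold)

lemma threshold_halve_asymp:
  "(\<lambda>x. if k \<in> A then a (fst x, snd x / 2) else b (fst x, snd x / 2)) \<sim>[ab_to_0] (\<lambda>x. \<bar>ln (err_level A k x)\<bar>)"
proof (cases "k \<in> A")
  case True
  then show ?thesis
    using asymp_equiv_compose'[OF a_asymp filterlim_halve_snd_ab_to_0]
    by (simp add: err_level_def case_prod_unfold)
next
  case False
  have "(\<lambda>x. b (fst x, snd x / 2)) \<sim>[ab_to_0] (\<lambda>x. \<bar>ln (snd x / 2)\<bar>)"
    using asymp_equiv_compose'[OF b_asymp filterlim_halve_snd_ab_to_0] by (simp add: case_prod_unfold)
  also have "(\<lambda>t::real. \<bar>ln (t / 2)\<bar>) \<sim>[at_right 0] (\<lambda>t. \<bar>ln t\<bar>)"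
    by real_asymp
  from asymp_equiv_compose'[OF this filterlim_snd_ab_to_0]
  have "(\<lambda>x. \<bar>ln (snd x / 2)\<bar>) \<sim>[ab_to_0] (\<lambda>x. \<bar>ln (snd x)\<bar>)" .
  finally show ?thesis
    using False by (simp add: err_level_def)
qed

lemma L_dec_le_E_sprt_T_halve:
  assumes \<alpha>: "\<alpha> \<in> {0<..<1}" and \<beta>: "\<beta> \<in> {0<..<1}"
  shows "L_dec K M P0 P1 k A \<alpha> \<beta> Pis \<le> E_sprt_T K P0 P1 lam (a (\<alpha>, \<beta>/2)) (b (\<alpha>, \<beta>/2)) k A"
proof -
  have \<beta>2: "\<beta>/2 \<in> {0<..<1}"
    using \<beta> by auto
  have ab: "a (\<alpha>, \<beta>/2) > 0" "b (\<alpha>, \<beta>/2) > 0"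
    using ab_pos[OF \<alpha> \<beta>2] by auto
  have "finite Pis"
    using Pi_sub by (rule finite_subset) simp
  then have "eventually (\<lambda>N. N \<ge> 1 \<and> (\<forall>A'\<in>Pis. measure (PA A')
      {\<omega>\<in>\<Omega>. \<exists>k\<in>{1..K}. enat N < sprt_T lam (a (\<alpha>, \<beta>/2)) (b (\<alpha>, \<beta>/2)) k \<omega>} < \<beta>/2)) sequentially"
    using \<beta> eventually_ge_at_top[of 1]
    by (intro eventually_conj eventually_ball_finite ballI order_tendstoD(2)[OF tail_sprt_T_tendsto_0[OF ab]]) auto
  then obtain N where N: "N \<ge> 1" and tail: "\<And>A'. A' \<in> Pis \<Longrightarrow> measure (PA A')
      {\<omega>\<in>\<Omega>. \<exists>k\<in>{1..K}. enat N < sprt_T lam (a (\<alpha>, \<beta>/2)) (b (\<alpha>, \<beta>/2)) k \<omega>} \<le> \<beta>/2"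
    unfolding eventually_sequentially by (meson less_imp_le order_refl)
  have "error_ok K P0 P1 (trunc_D (a (\<alpha>, \<beta>/2)) (b (\<alpha>, \<beta>/2)) N) \<alpha> \<beta> Pis"
    by (rule error_ok_trunc[OF Pi_sub sprt_ok[OF \<alpha> \<beta>2] tail])
  then show ?thesis
    by (rule L_dec_le_E_sprt_T[OF N])
qed

lemma eventually_expected_time_ge:
  assumes A: "A \<in> Pis" and k: "k \<in> {1..K}" and \<delta>: "0 < \<delta>" "\<delta> < 1"
  shows "eventually (\<lambda>x. \<forall>T D. stream_adapted T D \<longrightarrow> error_ok K P0 P1 D (fst x) (snd x) Pis \<longrightarrow>
    ennreal ((1 - \<delta>) * \<bar>ln (err_level A k x)\<bar> / rate A k) \<le> (\<integral>\<^sup>+\<omega>. ennreal_of_enat (T k \<omega>) \<partial>PA A)) ab_to_0"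
proof -
  obtain B where B: "B \<in> Pis" and AB: "k \<in> A \<longleftrightarrow> k \<notin> B"
    using Pi_rich[OF k] by metis
  obtain \<alpha>0 where \<alpha>0: "\<alpha>0 > 0" and bound: "\<And>\<alpha> \<beta> T D. 0 < \<alpha> \<Longrightarrow> \<alpha> < \<alpha>0 \<Longrightarrow> \<beta> < \<alpha>0 \<Longrightarrow>
      stream_adapted T D \<Longrightarrow>
      measure (PA B) {\<omega>\<in>\<Omega>. D k \<omega> \<noteq> (k \<in> B)} \<le> \<alpha> \<Longrightarrow>
      measure (PA A) {\<omega>\<in>\<Omega>. D k \<omega> \<noteq> (k \<in> A)} \<le> \<beta> \<Longrightarrow>
      ennreal ((1 - \<delta>) * \<bar>ln \<alpha>\<bar> / rate A k) \<le> (\<integral>\<^sup>+\<omega>. ennreal_of_enat (T k \<omega>) \<partial>PA A)"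
    using expected_time_lower_bound_adapted[OF k AB \<delta>] by blast
  have "eventually (\<lambda>t::real. t < \<alpha>0) (at_right 0)"
    using \<alpha>0 by (auto simp: eventually_at_right_field)
  then have small: "eventually (\<lambda>x. fst x < \<alpha>0 \<and> snd x < \<alpha>0) ab_to_0"
    using filterlim_fst_ab_to_0 filterlim_snd_ab_to_0 by (auto simp: filterlim_iff intro: eventually_conj)
  from small eventually_ab_to_0_unit_square show ?thesis
  proof eventually_elim
    case (elim x)
    show ?case
    proof (intro allI impI)
      fix T D assume adapted: "stream_adapted T D" and ok: "error_ok K P0 P1 D (fst x) (snd x) Pis"
      have D: "\<And>j. j \<in> {1..K} \<Longrightarrow> Measurable.pred (joint_space K M) (D j)"
        using adapted by (simp add: stream_adapted_def)
      show "ennreal ((1 - \<delta>) * \<bar>ln (err_level A k x)\<bar> / rate A k) \<le> (\<integral>\<^sup>+\<omega>. ennreal_of_enat (T k \<omega>) \<partial>PA A)"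
        using bound[OF _ _ _ adapted error_ok_wrong_decision[OF ok Pi_sub B k D]
            error_ok_wrong_decision[OF ok Pi_sub A k D]] elim AB
        by (auto simp: err_level_def split: if_splits)
    qed
  qed
qed

lemma asymp_E_sprt_T:
  assumes A: "A \<in> Pis" and k: "k \<in> {1..K}"
  shows "(\<lambda>x. enn2real (E_sprt_T K P0 P1 lam (a x) (b x) k A)) \<sim>[ab_to_0]
    (\<lambda>x. \<bar>ln (err_level A k x)\<bar> / rate A k)"
proof (rule asymp_equiv_enn2real_sandwich)
  show "eventually (\<lambda>x. \<bar>ln (err_level A k x)\<bar> / rate A k > 0) ab_to_0"
    using eventually_abs_ln_err_level_pos[of A k] by (rule eventually_mono) (simp add: rate_pos[OF k])
  fix \<delta> :: real assume \<delta>: "0 < \<delta>" "\<delta> < 1"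
  from eventually_expected_time_ge[OF A k \<delta>] eventually_ab_to_0_unit_square
  show "eventually (\<lambda>x. ennreal ((1 - \<delta>) * (\<bar>ln (err_level A k x)\<bar> / rate A k))
      \<le> E_sprt_T K P0 P1 lam (a x) (b x) k A) ab_to_0"
  proof eventually_elim
    case (elim x)
    have "error_ok K P0 P1 (sprt_D lam (a x) (b x)) (fst x) (snd x) Pis"
      using sprt_ok[of "fst x" "snd x"] elim(2) by simp
    with elim(1) stream_adapted_sprt
    have "ennreal ((1 - \<delta>) * \<bar>ln (err_level A k x)\<bar> / rate A k)
        \<le> (\<integral>\<^sup>+\<omega>. ennreal_of_enat (sprt_T lam (a x) (b x) k \<omega>) \<partial>PA A)"
      by blast
    then show ?case
      by (simp add: E_sprt_T_def)
  qed
  show "eventually (\<lambda>x. E_sprt_T K P0 P1 lam (a x) (b x) k A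
      \<le> ennreal ((1 + \<delta>) * (\<bar>ln (err_level A k x)\<bar> / rate A k))) ab_to_0"
    using eventually_E_sprt_T_le[OF k \<delta> eventually_ab_pos threshold_asymp] by simp
qed

lemma asymp_L_dec:
  assumes A: "A \<in> Pis" and k: "k \<in> {1..K}"
  shows "(\<lambda>x. enn2real (L_dec K M P0 P1 k A (fst x) (snd x) Pis)) \<sim>[ab_to_0]
    (\<lambda>x. \<bar>ln (err_level A k x)\<bar> / rate A k)"
proof (rule asymp_equiv_enn2real_sandwich)
  show "eventually (\<lambda>x. \<bar>ln (err_level A k x)\<bar> / rate A k > 0) ab_to_0"
    using eventually_abs_ln_err_level_pos[of A k] by (rule eventually_mono) (simp add: rate_pos[OF k])
  fix \<delta> :: real assume \<delta>: "0 < \<delta>" "\<delta> < 1"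
  from eventually_expected_time_ge[OF A k \<delta>]
  show "eventually (\<lambda>x. ennreal ((1 - \<delta>) * (\<bar>ln (err_level A k x)\<bar> / rate A k))
      \<le> L_dec K M P0 P1 k A (fst x) (snd x) Pis) ab_to_0"
  proof eventually_elim
    case (elim x)
    show ?case
      unfolding L_dec_def
    proof (rule INF_greatest, clarify)
      fix T D assume "is_decentralized K M T D" "error_ok K P0 P1 D (fst x) (snd x) Pis"
      with elim have "ennreal ((1 - \<delta>) * \<bar>ln (err_level A k x)\<bar> / rate A k)
          \<le> (\<integral>\<^sup>+\<omega>. ennreal_of_enat (enat (T k \<omega>)) \<partial>PA A)"
        using stream_adapted_decentralized by blast
      then show "ennreal ((1 - \<delta>) * (\<bar>ln (err_level A k x)\<bar> / rate A k))
          \<le> (\<integral>\<^sup>+\<omega>. ennreal (real (fst (T, D) k \<omega>)) \<partial>PA A)"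
        by (simp add: ennreal_of_nat_eq_real_of_nat)
    qed
  qed
  from eventually_E_sprt_T_le[OF k \<delta> eventually_ab_halve_pos threshold_halve_asymp] eventually_ab_to_0_unit_square
  show "eventually (\<lambda>x. L_dec K M P0 P1 k A (fst x) (snd x) Pis
      \<le> ennreal ((1 + \<delta>) * (\<bar>ln (err_level A k x)\<bar> / rate A k))) ab_to_0"
    by eventually_elim (auto intro: order_trans[OF L_dec_le_E_sprt_T_halve])
qed

theorem sprt_asymptotically_optimal:
  shows "\<forall>A\<in>Pis.
     (\<forall>i\<in>A.
        (\<lambda>(\<alpha>, \<beta>). enn2real (E_sprt_T K P0 P1 lam (a (\<alpha>, \<beta>)) (b (\<alpha>, \<beta>)) i A))
          \<sim>[ab_to_0] (\<lambda>(\<alpha>, \<beta>). enn2real (L_dec K M P0 P1 i A \<alpha> \<beta> Pis)) \<and>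
        (\<lambda>(\<alpha>, \<beta>). enn2real (L_dec K M P0 P1 i A \<alpha> \<beta> Pis))
          \<sim>[ab_to_0] (\<lambda>(\<alpha>, \<beta>). \<bar>ln \<alpha>\<bar> / I i)) \<and>
     (\<forall>j\<in>{1..K} - A.
        (\<lambda>(\<alpha>, \<beta>). enn2real (E_sprt_T K P0 P1 lam (a (\<alpha>, \<beta>)) (b (\<alpha>, \<beta>)) j A))
          \<sim>[ab_to_0] (\<lambda>(\<alpha>, \<beta>). enn2real (L_dec K M P0 P1 j A \<alpha> \<beta> Pis)) \<and>
        (\<lambda>(\<alpha>, \<beta>). enn2real (L_dec K M P0 P1 j A \<alpha> \<beta> Pis))
          \<sim>[ab_to_0] (\<lambda>(\<alpha>, \<beta>). \<bar>ln \<beta>\<bar> / J j))"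
proof -
  have optimal: "(\<lambda>x. enn2real (E_sprt_T K P0 P1 lam (a x) (b x) k A))
        \<sim>[ab_to_0] (\<lambda>x. enn2real (L_dec K M P0 P1 k A (fst x) (snd x) Pis))"
      "(\<lambda>x. enn2real (L_dec K M P0 P1 k A (fst x) (snd x) Pis))
        \<sim>[ab_to_0] (\<lambda>x. \<bar>ln (err_level A k x)\<bar> / rate A k)"
    if "A \<in> Pis" "k \<in> {1..K}" for A k
    using asymp_equiv_trans[OF asymp_E_sprt_T asymp_equiv_symI[OF asymp_L_dec]] asymp_L_dec that
    by blast+
  show ?thesis
  proof (intro ballI conjI)
    fix A i assume A: "A \<in> Pis" and i: "i \<in> A"
    then have k: "i \<in> {1..K}"
      using Pi_sub by blast
    show "(\<lambda>(\<alpha>, \<beta>). enn2real (E_sprt_T K P0 P1 lam (a (\<alpha>, \<beta>)) (b (\<alpha>, \<beta>)) i A))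
        \<sim>[ab_to_0] (\<lambda>(\<alpha>, \<beta>). enn2real (L_dec K M P0 P1 i A \<alpha> \<beta> Pis))"
      using optimal(1)[OF A k] by (simp add: case_prod_unfold)
    show "(\<lambda>(\<alpha>, \<beta>). enn2real (L_dec K M P0 P1 i A \<alpha> \<beta> Pis)) \<sim>[ab_to_0] (\<lambda>(\<alpha>, \<beta>). \<bar>ln \<alpha>\<bar> / I i)"
      using optimal(2)[OF A k] i by (simp add: case_prod_unfold err_level_def rate_def)
  next
    fix A j assume A: "A \<in> Pis" and j: "j \<in> {1..K} - A"
    then have k: "j \<in> {1..K}"
      by simp
    show "(\<lambda>(\<alpha>, \<beta>). enn2real (E_sprt_T K P0 P1 lam (a (\<alpha>, \<beta>)) (b (\<alpha>, \<beta>)) j A))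
        \<sim>[ab_to_0] (\<lambda>(\<alpha>, \<beta>). enn2real (L_dec K M P0 P1 j A \<alpha> \<beta> Pis))"
      using optimal(1)[OF A k] by (simp add: case_prod_unfold)
    show "(\<lambda>(\<alpha>, \<beta>). enn2real (L_dec K M P0 P1 j A \<alpha> \<beta> Pis)) \<sim>[ab_to_0] (\<lambda>(\<alpha>, \<beta>). \<bar>ln \<beta>\<bar> / J j)"
      using optimal(2)[OF A k] j by (simp add: case_prod_unfold err_level_def rate_def)
  qed
qed

end

theorem theorem5p3:
  fixes K :: nat
    and M :: "nat \<Rightarrow> 'a measure"
    and P0 P1 :: "nat \<Rightarrow> (nat \<Rightarrow> 'a) measure"
    and lam :: "nat \<Rightarrow> nat \<Rightarrow> (nat \<Rightarrow> 'a) \<Rightarrow> real"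
    and Pis :: "nat set set"
    and a b :: "real \<times> real \<Rightarrow> real"
    and I J :: "nat \<Rightarrow> real"
  assumes K: "K \<ge> 1"
    and P0: "\<And>k. k \<in> {1..K} \<Longrightarrow> prob_space (P0 k) \<and> sets (P0 k) = sets (path_space (M k))"
    and P1: "\<And>k. k \<in> {1..K} \<Longrightarrow> prob_space (P1 k) \<and> sets (P1 k) = sets (path_space (M k))"
    and lam_meas: "\<And>k n. k \<in> {1..K} \<Longrightarrow> n \<ge> 1 \<Longrightarrow>
        lam k n \<in> borel_measurable (stream_filt (M k) n)"
    and lam_llr: "\<And>k n. k \<in> {1..K} \<Longrightarrow> n \<ge> 1 \<Longrightarrow>
        density (restr_to_subalg (P0 k) (stream_filt (M k) n)) (\<lambda>x. ennreal (exp (lam k n x)))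
          = restr_to_subalg (P1 k) (stream_filt (M k) n)"
    and Pi_sub: "Pis \<subseteq> Pow {1..K}"
    and Pi_rich: "\<And>k. k \<in> {1..K} \<Longrightarrow> \<exists>A\<in>Pis. \<exists>B\<in>Pis. k \<in> A \<and> k \<notin> B"
    and ab_pos: "\<And>\<alpha> \<beta>. \<alpha> \<in> {0<..<1} \<Longrightarrow> \<beta> \<in> {0<..<1} \<Longrightarrow> a (\<alpha>, \<beta>) > 0 \<and> b (\<alpha>, \<beta>) > 0"
    and sprt_ok: "\<And>\<alpha> \<beta>. \<alpha> \<in> {0<..<1} \<Longrightarrow> \<beta> \<in> {0<..<1} \<Longrightarrow>
        error_ok K P0 P1 (sprt_D lam (a (\<alpha>, \<beta>)) (b (\<alpha>, \<beta>))) \<alpha> \<beta> Pis"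
    and a_asymp: "a \<sim>[ab_to_0] (\<lambda>(\<alpha>, \<beta>). \<bar>ln \<alpha>\<bar>)"
    and b_asymp: "b \<sim>[ab_to_0] (\<lambda>(\<alpha>, \<beta>). \<bar>ln \<beta>\<bar>)"
    and IJ_pos: "\<And>k. k \<in> {1..K} \<Longrightarrow> I k > 0 \<and> J k > 0"
    and limsup1: "\<And>k. k \<in> {1..K} \<Longrightarrow>
        AE x in P1 k. limsup (\<lambda>n. ereal (lam k n x / real n)) \<le> ereal (I k)"
    and limsup0: "\<And>k. k \<in> {1..K} \<Longrightarrow>
        AE x in P0 k. limsup (\<lambda>n. ereal (- lam k n x / real n)) \<le> ereal (J k)"
    and compl1: "\<And>k \<epsilon>. k \<in> {1..K} \<Longrightarrow> \<epsilon> > 0 \<Longrightarrow>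
        summable (\<lambda>n. measure (P1 k) {x \<in> space (P1 k). lam k n x / real n \<le> I k - \<epsilon>})"
    and compl0: "\<And>k \<epsilon>. k \<in> {1..K} \<Longrightarrow> \<epsilon> > 0 \<Longrightarrow>
        summable (\<lambda>n. measure (P0 k) {x \<in> space (P0 k). - lam k n x / real n \<le> J k - \<epsilon>})"
  shows "\<forall>A\<in>Pis.
     (\<forall>i\<in>A.
        (\<lambda>(\<alpha>, \<beta>). enn2real (E_sprt_T K P0 P1 lam (a (\<alpha>, \<beta>)) (b (\<alpha>, \<beta>)) i A))
          \<sim>[ab_to_0] (\<lambda>(\<alpha>, \<beta>). enn2real (L_dec K M P0 P1 i A \<alpha> \<beta> Pis)) \<and>
        (\<lambda>(\<alpha>, \<beta>). enn2real (L_dec K M P0 P1 i A \<alpha> \<beta> Pis))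
          \<sim>[ab_to_0] (\<lambda>(\<alpha>, \<beta>). \<bar>ln \<alpha>\<bar> / I i)) \<and>
     (\<forall>j\<in>{1..K} - A.
        (\<lambda>(\<alpha>, \<beta>). enn2real (E_sprt_T K P0 P1 lam (a (\<alpha>, \<beta>)) (b (\<alpha>, \<beta>)) j A))
          \<sim>[ab_to_0] (\<lambda>(\<alpha>, \<beta>). enn2real (L_dec K M P0 P1 j A \<alpha> \<beta> Pis)) \<and>
        (\<lambda>(\<alpha>, \<beta>). enn2real (L_dec K M P0 P1 j A \<alpha> \<beta> Pis))
          \<sim>[ab_to_0] (\<lambda>(\<alpha>, \<beta>). \<bar>ln \<beta>\<bar> / J j))"
proof -
  interpret sprt_design K M P0 P1 lam I J Pis a b
    by unfold_locales (fact P0 P1 lam_meas lam_llr IJ_pos limsup1 limsup0 compl1 compl0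
      Pi_sub Pi_rich ab_pos sprt_ok a_asymp b_asymp)+
  show ?thesis
    by (rule sprt_asymptotically_optimal)
qed

end
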